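(* Let $(B,\alpha_B)$ and $(H,\alpha_H)$ be Hom-coalgebras whose structure maps are morphisms in $\overline{\mathcal H}^{i,j}(Vec_\Bbbk)$ (in particular $\alpha_B,\alpha_H$ bijective), and let $\varphi:B\otimes H\to H\otimes B$, $\varphi(b\otimes h)=\sum h^\varphi\otimes b^\varphi$, be linear with $\varphi\circ(\alpha_B\otimes\alpha_H)=(\alpha_H\otimes\alpha_B)\circ\varphi$. For $n\in\mathbb Z$ define $\ddot\varphi(n)_X:(X\otimes B)\otimes H\to(X\otimes H)\otimes B$, $(x\otimes b)\otimes h\mapsto\sum(x\otimes\alpha_H(h)^\varphi)\otimes\alpha_B^n\big((\alpha_B^{-n-1}(b))^\varphi\big)$ (where $\varphi$ is applied to $\alpha_B^{-n-1}(b)\otimes\alpha_H(h)$). Then $\ddot\varphi(n):\ddot H\ddot B\to\ddot B\ddot H$ is a comonad distributive law if and only if for all $b\in B$, $h\in H$: (M1) $((\varphi\otimes\mathrm{id}_B)\circ(\mathrm{id}_B\otimes\varphi))(\Delta_B(b)\otimes\alpha_H(h))=(\alpha_H\otimes\Delta_B)(\varphi(b\otimes h))$; (M2) $((\mathrm{id}_H\otimes\varphi)\circ(\varphi\otimes\mathrm{id}_H))(\alpha_B(b)\otimes\Delta_H(h))=(\Delta_H\otimes\alpha_B)(\varphi(b\otimes h))$; (M3) $(\varepsilon_H\otimes\mathrm{id}_B)(\varphi(b\otimes h))=\varepsilon_H(h)b$; (M4) $(\mathrm{id}_H\otimes\varepsilon_B)(\varphi(b\otimes h))=\varepsilon_B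(b)h$.
   Context: $\Bbbk$ is a field of characteristic $0$; all vector spaces finite-dimensional; $i,j$ fixed integers. $\overline{\mathcal H}^{i,j}(Vec_\Bbbk)$: objects $(X,\alpha_X)$ with $\alpha_X$ a linear automorphism; morphisms linear maps commuting with the $\alpha$'s; tensor $(X\otimes Y,\alpha_X\otimes\alpha_Y)$, unit $(\Bbbk,\mathrm{id})$; $a_{X,Y,Z}((x\otimes y)\otimes z)=\alpha_X^{i+1}(x)\otimes(y\otimes\alpha_Z^{-j-1}(z))$, $l_X(\lambda\otimes x)=\lambda\alpha_X^{j+1}(x)$, $r_X(x\otimes\lambda)=\lambda\alpha_X^{i+1}(x)$. Hom-coalgebra $(C,\alpha,\Delta,\varepsilon)$: $\varepsilon\alpha=\varepsilon$, $\alpha(c_1)\otimes\Delta(c_2)=\Delta(c_1)\otimes\alpha(c_2)$, $\varepsilon(c_1)c_2=c_1\varepsilon(c_2)=\alpha(c)$. For a Hom-coalgebra $C$, $\ddot C=-\otimes C$ is the comonad on $\overline{\mathcal H}^{i,j}(Vec_\Bbbk)$ with comultiplication $x\otimes c\mapsto(\alpha_X(x)\otimes c_1)\otimes\alpha_C^{-1}(c_2)$ and counit $x\otimes c\mapsto\varepsilon_C(c)\alpha_X^{-1}(x)$. A comonad distributive law between comonads $(F,\Delta,\varepsilon)$ and $(G,\delta,\epsilon)$ is a natural $\psi:FG\to GF$ with $G\psi\circ\psi G\circ F\delta=\delta F\circ\psi$, $\psi F\circ F\psi\circ\Delta G=G\Delta\circ\psi$, $G\varepsilon\circ\psi=\varepsilon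 G$, $\epsilon F\circ\psi=F\epsilon$. *)

theory Defs
  imports Main
begin

text \<open>A universe of basis indices closed under pairing: every finite-dimensional
  space is (isomorphic to) 'k^I for a finite index set I, and the tensor
  product of 'k^I and 'k^J is 'k^(I x J), indexed by Tn i j.\<close>

datatype ix = Ix nat | Tn ix ix

type_synonym 'k vec = "ix \<Rightarrow> 'k"

definition space :: "ix set \<Rightarrow> ('k::zero) vec set" where
  "space I = {v. \<forall>t. t \<notin> I \<longrightarrow> v t = 0}"

definition tidx :: "ix set \<Rightarrow> ix set \<Rightarrow> ix set" where
  "tidx I J = {Tn i j | i j. i \<in> I \<and> j \<in> J}"

definition vadd :: "('k::plus) vec \<Rightarrow> 'k vec \<Rightarrow> 'k vec" where
  "vadd v w = (\<lambda>t. v t + w t)"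

definition smul :: "'k::times \<Rightarrow> 'k vec \<Rightarrow> 'k vec" where
  "smul c v = (\<lambda>t. c * v t)"

definition bv :: "ix \<Rightarrow> ('k::{zero,one}) vec" where
  "bv i = (\<lambda>t. if t = i then 1 else 0)"

definition tvec :: "('k::{times,zero}) vec \<Rightarrow> 'k vec \<Rightarrow> 'k vec" where
  "tvec v w = (\<lambda>t. case t of Tn i j \<Rightarrow> v i * w j | Ix _ \<Rightarrow> 0)"

definition assocL :: "('k::zero) vec \<Rightarrow> 'k vec" where
  "assocL v = (\<lambda>t. case t of Tn (Tn i j) k \<Rightarrow> v (Tn i (Tn j k)) | _ \<Rightarrow> 0)"

definition assocR :: "('k::zero) vec \<Rightarrow> 'k vec" where
  "assocR v = (\<lambda>t. case t of Tn i (Tn j k) \<Rightarrow> v (Tn (Tn i j) k) | _ \<Rightarrow> 0)"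

definition lin2 :: "ix set \<Rightarrow> ix set \<Rightarrow> (('k::comm_ring_1) vec \<Rightarrow> 'k vec \<Rightarrow> 'k vec)
    \<Rightarrow> 'k vec \<Rightarrow> 'k vec" where
  "lin2 I J g w = (\<lambda>t. \<Sum>p\<in>I \<times> J. w (Tn (fst p) (snd p)) * g (bv (fst p)) (bv (snd p)) t)"

definition lin3 :: "ix set \<Rightarrow> ix set \<Rightarrow> ix set
    \<Rightarrow> (('k::comm_ring_1) vec \<Rightarrow> 'k vec \<Rightarrow> 'k vec \<Rightarrow> 'k vec) \<Rightarrow> 'k vec \<Rightarrow> 'k vec" where
  "lin3 I J K g w = (\<lambda>t. \<Sum>p\<in>I \<times> J \<times> K.
      w (Tn (Tn (fst p) (fst (snd p))) (snd (snd p))) *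
      g (bv (fst p)) (bv (fst (snd p))) (bv (snd (snd p))) t)"

definition tmap :: "ix set \<Rightarrow> ix set \<Rightarrow> (('k::comm_ring_1) vec \<Rightarrow> 'k vec)
    \<Rightarrow> ('k vec \<Rightarrow> 'k vec) \<Rightarrow> 'k vec \<Rightarrow> 'k vec" where
  "tmap I J f g = lin2 I J (\<lambda>x y. tvec (f x) (g y))"

definition zpow :: "ix set \<Rightarrow> (('k::zero) vec \<Rightarrow> 'k vec) \<Rightarrow> int \<Rightarrow> 'k vec \<Rightarrow> 'k vec" where
  "zpow I f n = (if 0 \<le> n then f ^^ nat n else inv_into (space I) f ^^ nat (- n))"

definition lin_on :: "ix set \<Rightarrow> ix set \<Rightarrow> (('k::comm_ring_1) vec \<Rightarrow> 'k vec) \<Rightarrow> bool" where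
  "lin_on I J f \<longleftrightarrow> (\<forall>v\<in>space I. f v \<in> space J)
     \<and> (\<forall>v\<in>space I. \<forall>w\<in>space I. f (vadd v w) = vadd (f v) (f w))
     \<and> (\<forall>c. \<forall>v\<in>space I. f (smul c v) = smul c (f v))"

definition lin_functional :: "ix set \<Rightarrow> (('k::comm_ring_1) vec \<Rightarrow> 'k) \<Rightarrow> bool" where
  "lin_functional I e \<longleftrightarrow>
       (\<forall>v\<in>space I. \<forall>w\<in>space I. e (vadd v w) = e v + e w)
     \<and> (\<forall>c. \<forall>v\<in>space I. e (smul c v) = c * e v)"

text \<open>Objects (X, alpha_X) of the category H^{i,j}(Vec_k): X = 'k^I, I finite,
  alpha_X a linear automorphism.  Morphisms: linear maps commuting with the alphas.\<close>
definition is_obj :: "ix set \<Rightarrow> (('k::comm_ring_1) vec \<Rightarrow> 'k vec) \<Rightarrow> bool" where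
  "is_obj I a \<longleftrightarrow> finite I \<and> lin_on I I a \<and> bij_betw a (space I) (space I)"

definition is_hom :: "ix set \<Rightarrow> (('k::comm_ring_1) vec \<Rightarrow> 'k vec) \<Rightarrow> ix set
    \<Rightarrow> ('k vec \<Rightarrow> 'k vec) \<Rightarrow> ('k vec \<Rightarrow> 'k vec) \<Rightarrow> bool" where
  "is_hom I a J b f \<longleftrightarrow> lin_on I J f \<and> (\<forall>v\<in>space I. f (a v) = b (f v))"

definition hom_coalgebra :: "ix set \<Rightarrow> (('k::comm_ring_1) vec \<Rightarrow> 'k vec)
    \<Rightarrow> ('k vec \<Rightarrow> 'k vec) \<Rightarrow> ('k vec \<Rightarrow> 'k) \<Rightarrow> bool" where
  "hom_coalgebra C a D e \<longleftrightarrow>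
     is_obj C a
   \<and> lin_on C (tidx C C) D
   \<and> lin_functional C e
   \<and> (\<forall>c\<in>space C. D (a c) = tmap C C a a (D c))
   \<and> (\<forall>c\<in>space C. e (a c) = e c)
   \<and> (\<forall>c\<in>space C. assocL (tmap C (tidx C C) a D (D c)) = tmap (tidx C C) C D a (D c))
   \<and> (\<forall>c\<in>space C. lin2 C C (\<lambda>x y. smul (e x) y) (D c) = a c)
   \<and> (\<forall>c\<in>space C. lin2 C C (\<lambda>x y. smul (e y) x) (D c) = a c)"

text \<open>The comonad C-double-dot = - (x) C: comultiplication and counit at object (X = 'k^I, a).
  x (x) c |-> (a x (x) c_1) (x) alpha_C^{-1}(c_2), and x (x) c |-> eps(c) a^{-1}(x).
  On objects: (I, a) |-> (tidx I C, tmap I C a alpha_C); on morphisms f |-> tmap I C f id.\<close>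
definition ccomult :: "ix set \<Rightarrow> (('k::comm_ring_1) vec \<Rightarrow> 'k vec) \<Rightarrow> ('k vec \<Rightarrow> 'k vec)
    \<Rightarrow> ix set \<Rightarrow> ('k vec \<Rightarrow> 'k vec) \<Rightarrow> 'k vec \<Rightarrow> 'k vec" where
  "ccomult C aC D I a = lin2 I C (\<lambda>x c. assocL (tvec (a x) (tmap C C id (inv_into (space C) aC) (D c))))"

definition ccounit :: "ix set \<Rightarrow> (('k::comm_ring_1) vec \<Rightarrow> 'k)
    \<Rightarrow> ix set \<Rightarrow> ('k vec \<Rightarrow> 'k vec) \<Rightarrow> 'k vec \<Rightarrow> 'k vec" where
  "ccounit C e I a = lin2 I C (\<lambda>x c. smul (e c) (inv_into (space I) a x))"

text \<open>Comonad distributive law Psi : F G -> G F for F = H-double-dot, G = B-double-dot,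
  written out componentwise. Psi I a is the component at the object (k^I, a).\<close>
definition distr_law :: "ix set \<Rightarrow> (('k::comm_ring_1) vec \<Rightarrow> 'k vec) \<Rightarrow> ('k vec \<Rightarrow> 'k vec)
    \<Rightarrow> ('k vec \<Rightarrow> 'k) \<Rightarrow> ix set \<Rightarrow> ('k vec \<Rightarrow> 'k vec) \<Rightarrow> ('k vec \<Rightarrow> 'k vec) \<Rightarrow> ('k vec \<Rightarrow> 'k)
    \<Rightarrow> (ix set \<Rightarrow> ('k vec \<Rightarrow> 'k vec) \<Rightarrow> 'k vec \<Rightarrow> 'k vec) \<Rightarrow> bool" where
  "distr_law IH aH DH eH IB aB DB eB Psi \<longleftrightarrow>
     \<comment> \<open>each component is a morphism FGX -> GFX of the category\<close>
     (\<forall>I a. is_obj I a \<longrightarrow>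
        is_hom (tidx (tidx I IB) IH) (tmap (tidx I IB) IH (tmap I IB a aB) aH)
               (tidx (tidx I IH) IB) (tmap (tidx I IH) IB (tmap I IH a aH) aB) (Psi I a))
   \<and> \<comment> \<open>naturality\<close>
     (\<forall>I a J b f. is_obj I a \<longrightarrow> is_obj J b \<longrightarrow> is_hom I a J b f \<longrightarrow>
        (\<forall>w\<in>space (tidx (tidx I IB) IH).
           Psi J b (tmap (tidx I IB) IH (tmap I IB f id) id w)
           = tmap (tidx I IH) IB (tmap I IH f id) id (Psi I a w)))
   \<and> \<comment> \<open>the four axioms\<close>
     (\<forall>I a. is_obj I a \<longrightarrow>
        (let XB = tidx I IB; aXB = tmap I IB a aB; XH = tidx I IH; aXH = tmap I IH a aH
         in \<forall>w\<in>space (tidx XB IH).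
              tmap (tidx XB IH) IB (Psi I a) id
                 (Psi XB aXB (tmap XB IH (ccomult IB aB DB I a) id w))
                = ccomult IB aB DB XH aXH (Psi I a w)
            \<and> Psi XH aXH (tmap (tidx XB IH) IH (Psi I a) id (ccomult IH aH DH XB aXB w))
                = tmap XH IB (ccomult IH aH DH I a) id (Psi I a w)
            \<and> tmap XH IB (ccounit IH eH I a) id (Psi I a w) = ccounit IH eH XB aXB w
            \<and> ccounit IB eB XH aXH (Psi I a w) = tmap XB IH (ccounit IB eB I a) id w))"

definition psi_n :: "ix set \<Rightarrow> (('k::comm_ring_1) vec \<Rightarrow> 'k vec) \<Rightarrow> ix set \<Rightarrow> ('k vec \<Rightarrow> 'k vec)
    \<Rightarrow> ('k vec \<Rightarrow> 'k vec) \<Rightarrow> int \<Rightarrow> ix set \<Rightarrow> ('k vec \<Rightarrow> 'k vec) \<Rightarrow> 'k vec \<Rightarrow> 'k vec" where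
  "psi_n IB aB IH aH phi n I a = lin3 I IB IH (\<lambda>x b h.
      assocL (tvec x (tmap IH IB id (zpow IB aB n)
                        (phi (tvec (zpow IB aB (- n - 1) b) (aH h))))))"

end

theory Submission
  imports Defs
begin

text \<open>The component of \<open>psi_n\<close> at an object X is \<open>id\<^sub>X \<otimes> phi_tw\<close> up to reassociation, where
  \<open>phi_tw\<close> is phi conjugated by powers of \<open>\<alpha>\<^sub>B\<close> and \<open>\<alpha>\<^sub>H\<close>.  Since phi commutes with the structure
  maps, every component is a morphism and the family is natural, so only the four axioms matter.
  Evaluate each of them on a pure tensor \<open>(x \<otimes> \<alpha>\<^sub>B\<^sup>k c) \<otimes> h'\<close>, with \<open>k = n + 2\<close> and \<open>h' = h\<close> for
  the comultiplication of H, and \<open>k = n + 1\<close>, \<open>h' = \<alpha>\<^sub>H\<^sup>-\<^sup>1 h\<close> otherwise.  The two sides become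
  \<open>E\<^sub>x (T L)\<close> and \<open>E\<^sub>x (T R)\<close>, where \<open>L = R\<close> is the corresponding condition (M1)-(M4) at \<open>(c, h)\<close>,
  T is an isomorphism built from powers of the structure maps, and \<open>E\<^sub>x\<close> tensors with
  \<open>\<alpha>\<^sub>X x\<close> or \<open>\<alpha>\<^sub>X\<^sup>-\<^sup>1 x\<close> and reassociates.  Hence (M1)-(M4) give the axioms on basis tensors, and
  so everywhere by linearity.  Conversely, the axioms at the unit object \<open>X = \<bbbk>\<close> with \<open>x = 1\<close>
  give back (M1)-(M4), because \<open>E\<^sub>1\<close> and T are injective.\<close>

section \<open>Linear algebra in coordinates\<close>

text \<open>\<open>lin_on\<close> without its codomain condition: this is what evaluating \<open>lin2\<close>, \<open>tmap\<close>
  on pure tensors needs, and the simplifier can prove it without guessing a codomain.\<close>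
definition linear_on :: "ix set \<Rightarrow> (('k::comm_ring_1) vec \<Rightarrow> 'k vec) \<Rightarrow> bool" where
  "linear_on I f \<longleftrightarrow> (\<forall>v\<in>space I. \<forall>w\<in>space I. f (vadd v w) = vadd (f v) (f w))
     \<and> (\<forall>c. \<forall>v\<in>space I. f (smul c v) = smul c (f v))"

lemma lin_on_linear_on: "lin_on I J f \<Longrightarrow> linear_on I f"
  by (simp add: lin_on_def linear_on_def)

lemma lin_onD: "lin_on I J f \<Longrightarrow> v \<in> space I \<Longrightarrow> f v \<in> space J"
  by (simp add: lin_on_def)

lemma lin_on_smul:
  "lin_on I J f \<Longrightarrow> v \<in> space I \<Longrightarrow> f (smul c v) = smul c (f v)"
  by (simp add: lin_on_def)

lemma zero_in_space [simp]: "(\<lambda>_. 0::'k::comm_ring_1) \<in> space I"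
  by (simp add: space_def)

lemma vadd_in_space [simp]:
  "(v::'k::comm_ring_1 vec) \<in> space I \<Longrightarrow> w \<in> space I
   \<Longrightarrow> vadd v w \<in> space I"
  by (simp add: space_def vadd_def)

lemma smul_in_space [simp]: "(v::'k::comm_ring_1 vec) \<in> space I \<Longrightarrow> smul c v \<in> space I"
  by (simp add: space_def smul_def)

lemma bv_in_space [simp]: "i \<in> I \<Longrightarrow> (bv i :: 'k::comm_ring_1 vec) \<in> space I"
  by (simp add: space_def bv_def)

lemma tvec_in_space [simp]:
  "(u::'k::comm_ring_1 vec) \<in> space I \<Longrightarrow> v \<in> space J
   \<Longrightarrow> tvec u v \<in> space (tidx I J)"
  by (auto simp: space_def tvec_def tidx_def split: ix.split)

lemma bv_Tn: "(bv (Tn i j) :: 'k::comm_ring_1 vec) = tvec (bv i) (bv j)"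
  by (auto simp: bv_def tvec_def fun_eq_iff split: ix.split)

lemma Tn_in_tidx [simp]: "Tn i j \<in> tidx I J \<longleftrightarrow> i \<in> I \<and> j \<in> J"
  by (simp add: tidx_def)

lemma Ix_notin_tidx [simp]: "Ix m \<notin> tidx I J"
  by (simp add: tidx_def)

lemma finite_tidx [simp]: "finite I \<Longrightarrow> finite J \<Longrightarrow> finite (tidx I J)"
  by (simp add: tidx_def finite_image_set2)

lemma smul_add: "smul (c + d) z = vadd (smul c z) (smul d z)" for z :: "'k::comm_ring_1 vec"
  by (simp add: smul_def vadd_def fun_eq_iff algebra_simps)

lemma smul_mult: "smul (c * d) z = smul c (smul d z)" for z :: "'k::comm_ring_1 vec"
  by (simp add: smul_def fun_eq_iff)

lemma smul_vadd: "smul c (vadd v w) = vadd (smul c v) (smul c w)" for v :: "'k::comm_ring_1 vec"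
  by (simp add: smul_def vadd_def fun_eq_iff algebra_simps)

lemma smul_commute: "smul c (smul d z) = smul d (smul c z)" for z :: "'k::comm_ring_1 vec"
  by (simp add: smul_def fun_eq_iff algebra_simps)

lemma linear_on_zero: "linear_on I f \<Longrightarrow> f (\<lambda>_. 0) = (\<lambda>_. 0)"
proof -
  assume "linear_on I f"
  then have "f (smul 0 (\<lambda>_. 0)) = smul 0 (f (\<lambda>_. 0))" by (simp add: linear_on_def)
  then show ?thesis by (simp add: smul_def)
qed

lemma space_basis_expansion:
  assumes "finite I" "(v::'k::comm_ring_1 vec) \<in> space I"
  shows "v = (\<lambda>t. \<Sum>i\<in>I. v i * bv i t)"
proof
  fix t
  show "v t = (\<Sum>i\<in>I. v i * bv i t)"
  proof (cases "t \<in> I")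
    case True
    have "(\<Sum>i\<in>I. v i * bv i t) = (\<Sum>i\<in>I. if i = t then v t else 0)"
      by (intro sum.cong) (auto simp: bv_def)
    then show ?thesis using assms True by simp
  next
    case False
    then show ?thesis using assms by (auto simp: bv_def space_def intro!: sum.neutral)
  qed
qed

lemma linear_on_sum:
  assumes "linear_on I f" "finite S" "\<forall>k\<in>S. u k \<in> space I"
  shows "f (\<lambda>t. \<Sum>k\<in>S. c k * u k t) = (\<lambda>t. \<Sum>k\<in>S. c k * f (u k) t)"
  using assms(2,3)
proof (induction S rule: finite_induct)
  case empty
  then show ?case using linear_on_zero[OF assms(1)] by simp
next
  case (insert x F)
  have split: "(\<lambda>t. \<Sum>k\<in>insert x F. c k * u k t) = vadd (smul (c x) (u x)) (\<lambda>t. \<Sum>k\<in>F. c k * u k t)"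
    using insert by (simp add: vadd_def smul_def)
  have "(\<lambda>t. \<Sum>k\<in>F. c k * u k t) \<in> space I" using insert by (simp add: space_def)
  then have "f (\<lambda>t. \<Sum>k\<in>insert x F. c k * u k t)
      = vadd (smul (c x) (f (u x))) (f (\<lambda>t. \<Sum>k\<in>F. c k * u k t))"
    unfolding split using assms(1) insert by (simp add: linear_on_def)
  also have "\<dots> = (\<lambda>t. \<Sum>k\<in>insert x F. c k * f (u k) t)"
    using insert by (simp add: vadd_def smul_def)
  finally show ?case .
qed

lemma linear_on_eq_on_basis:
  assumes "finite I" "linear_on I f" "linear_on I g" "\<And>i. i \<in> I \<Longrightarrow> f (bv i) = g (bv i)"
    and "v \<in> space I"
  shows "f v = g v"
proof -
  have "f v = f (\<lambda>t. \<Sum>i\<in>I. v i * bv i t)" using space_basis_expansion[OF assms(1,5)] by simp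
  also have "\<dots> = (\<lambda>t. \<Sum>i\<in>I. v i * f (bv i) t)" using linear_on_sum[OF assms(2,1)] by simp
  also have "\<dots> = (\<lambda>t. \<Sum>i\<in>I. v i * g (bv i) t)" using assms(4) by simp
  also have "\<dots> = g (\<lambda>t. \<Sum>i\<in>I. v i * bv i t)" using linear_on_sum[OF assms(3,1)] by simp
  also have "\<dots> = g v" using space_basis_expansion[OF assms(1,5)] by simp
  finally show ?thesis .
qed

lemma tvec_vadd_left: "tvec (vadd u u') v = vadd (tvec u v) (tvec u' v)" for u :: "'k::comm_ring_1 vec"
  by (auto simp: tvec_def vadd_def fun_eq_iff algebra_simps split: ix.split)

lemma tvec_vadd_right: "tvec u (vadd v v') = vadd (tvec u v) (tvec u v')" for u :: "'k::comm_ring_1 vec"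
  by (auto simp: tvec_def vadd_def fun_eq_iff algebra_simps split: ix.split)

lemma tvec_smul_left: "tvec (smul c u) v = smul c (tvec u v)" for u :: "'k::comm_ring_1 vec"
  by (auto simp: tvec_def smul_def fun_eq_iff algebra_simps split: ix.split)

lemma tvec_smul_right: "tvec u (smul c v) = smul c (tvec u v)" for u :: "'k::comm_ring_1 vec"
  by (auto simp: tvec_def smul_def fun_eq_iff algebra_simps split: ix.split)

lemmas tvec_linear = tvec_vadd_left tvec_vadd_right tvec_smul_left tvec_smul_right

lemma tvec_basis_left_inj:
  assumes "tvec (bv i) Q = tvec (bv i) (Q' :: 'k::comm_ring_1 vec)"
  shows "Q = Q'"
proof
  fix t
  have "tvec (bv i) Q (Tn i t) = tvec (bv i) Q' (Tn i t)" using assms by simp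
  then show "Q t = Q' t" by (simp add: tvec_def bv_def)
qed

lemma assocL_tvec [simp]: "assocL (tvec u (tvec v w)) = tvec (tvec u v) w" for u :: "'k::comm_ring_1 vec"
  by (auto simp: assocL_def tvec_def fun_eq_iff split: ix.split)

lemma assocR_tvec [simp]: "assocR (tvec (tvec u v) w) = tvec u (tvec v w)" for u :: "'k::comm_ring_1 vec"
  by (auto simp: assocR_def tvec_def fun_eq_iff split: ix.split)

lemma assocL_vadd: "assocL (vadd v w) = vadd (assocL v) (assocL w)" for v :: "'k::comm_ring_1 vec"
  by (auto simp: assocL_def vadd_def fun_eq_iff split: ix.split)

lemma assocL_smul: "assocL (smul c v) = smul c (assocL v)" for v :: "'k::comm_ring_1 vec"
  by (auto simp: assocL_def smul_def fun_eq_iff split: ix.split)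

lemma assocR_vadd: "assocR (vadd v w) = vadd (assocR v) (assocR w)" for v :: "'k::comm_ring_1 vec"
  by (auto simp: assocR_def vadd_def fun_eq_iff split: ix.split)

lemma assocR_smul: "assocR (smul c v) = smul c (assocR v)" for v :: "'k::comm_ring_1 vec"
  by (auto simp: assocR_def smul_def fun_eq_iff split: ix.split)

lemma assocR_assocL [simp]:
  "(v::'k::comm_ring_1 vec) \<in> space (tidx I (tidx J K)) \<Longrightarrow> assocR (assocL v) = v"
  by (auto simp: assocR_def assocL_def space_def fun_eq_iff split: ix.split)

lemma lin_on_id [simp]: "lin_on I I (id :: 'k::comm_ring_1 vec \<Rightarrow> _)"
  by (simp add: lin_on_def)

lemma lin_on_ident [simp]: "lin_on I I (\<lambda>v. v :: 'k::comm_ring_1 vec)"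
  by (simp add: lin_on_def)

lemma lin_on_assocL [simp]:
  "lin_on (tidx I (tidx J K)) (tidx (tidx I J) K) (assocL :: 'k::comm_ring_1 vec \<Rightarrow> _)"
  unfolding lin_on_def assocL_vadd assocL_smul by (auto simp: space_def assocL_def split: ix.split)

lemma lin_on_assocR [simp]:
  "lin_on (tidx (tidx I J) K) (tidx I (tidx J K)) (assocR :: 'k::comm_ring_1 vec \<Rightarrow> _)"
  unfolding lin_on_def assocR_vadd assocR_smul by (auto simp: space_def assocR_def split: ix.split)

lemma assocL_in_space [simp]:
  "(v::'k::comm_ring_1 vec) \<in> space (tidx I (tidx J K))
   \<Longrightarrow> assocL v \<in> space (tidx (tidx I J) K)"
  by (rule lin_onD[OF lin_on_assocL])

lemma lin_on_comp:
  "lin_on I J F \<Longrightarrow> lin_on J K g \<Longrightarrow> lin_on I K (\<lambda>v. g (F v))"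
  by (simp add: lin_on_def)

lemma lin_on_assocL_comp:
  "lin_on I (tidx A (tidx B C)) F \<Longrightarrow> lin_on I (tidx (tidx A B) C) (\<lambda>v. assocL (F v))"
  using lin_on_comp[OF _ lin_on_assocL] .

lemma lin_on_assocR_comp:
  "lin_on I (tidx (tidx A B) C) F \<Longrightarrow> lin_on I (tidx A (tidx B C)) (\<lambda>v. assocR (F v))"
  using lin_on_comp[OF _ lin_on_assocR] .

lemma lin_on_tvec_left_comp:
  "u \<in> space A \<Longrightarrow> lin_on I B F
   \<Longrightarrow> lin_on I (tidx A B) (\<lambda>v. tvec u (F v))"
  by (simp add: lin_on_def tvec_vadd_right tvec_smul_right)

lemma lin_on_tvec_right_comp:
  "w \<in> space B \<Longrightarrow> lin_on I A F
   \<Longrightarrow> lin_on I (tidx A B) (\<lambda>v. tvec (F v) w)"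
  by (simp add: lin_on_def tvec_vadd_left tvec_smul_left)

lemma linear_on_id [simp]: "linear_on I (id :: 'k::comm_ring_1 vec \<Rightarrow> _)"
  by (simp add: linear_on_def)

lemma linear_on_ident [simp]: "linear_on I (\<lambda>v. v :: 'k::comm_ring_1 vec)"
  by (simp add: linear_on_def)

lemma linear_on_assocL [simp]: "linear_on I (assocL :: 'k::comm_ring_1 vec \<Rightarrow> _)"
  by (simp add: linear_on_def assocL_vadd assocL_smul)

lemma lin2_vadd: "lin2 I J g (vadd v w) = vadd (lin2 I J g v) (lin2 I J g w)"
  by (simp add: lin2_def vadd_def fun_eq_iff sum.distrib algebra_simps)

lemma lin2_smul: "lin2 I J g (smul c v) = smul c (lin2 I J g v)"
  by (simp add: lin2_def smul_def fun_eq_iff sum_distrib_left algebra_simps)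

lemma linear_on_lin2 [simp]: "linear_on K (lin2 I J g)"
  by (simp add: linear_on_def lin2_vadd lin2_smul)

lemma lin2_in_space:
  "(\<And>i j. i \<in> I \<Longrightarrow> j \<in> J \<Longrightarrow> g (bv i) (bv j) \<in> space K)
   \<Longrightarrow> lin2 I J g w \<in> space K"
  by (auto simp: lin2_def space_def intro!: sum.neutral)

lemma lin_on_lin2:
  "(\<And>i j. i \<in> I \<Longrightarrow> j \<in> J \<Longrightarrow> g (bv i) (bv j) \<in> space K)
   \<Longrightarrow> lin_on (tidx I J) K (lin2 I J g)"
  by (simp add: lin_on_def lin2_vadd lin2_smul lin2_in_space)

lemma lin2_bv:
  assumes "finite I" "finite J" "i \<in> I" "j \<in> J"
  shows "lin2 I J g (bv (Tn i j)) = g (bv i) (bv j)"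
proof
  fix t
  have "lin2 I J g (bv (Tn i j)) t = (\<Sum>p\<in>I \<times> J. if p = (i, j) then g (bv i) (bv j) t else 0)"
    unfolding lin2_def by (intro sum.cong) (auto simp: bv_def)
  then show "lin2 I J g (bv (Tn i j)) t = g (bv i) (bv j) t" using assms by simp
qed

lemma lin2_tvec:
  assumes fin: "finite I" "finite J"
    and lin_left: "\<And>v. v \<in> space J \<Longrightarrow> linear_on I (\<lambda>u. g u v)"
    and lin_right: "\<And>u. u \<in> space I \<Longrightarrow> linear_on J (g u)"
    and u: "u \<in> space I" and v: "v \<in> space J"
  shows "lin2 I J g (tvec u v) = g u v"
proof -
  have on_basis_left: "lin2 I J g (tvec (bv i) v) = g (bv i) v" if i: "i \<in> I" for i
  proof (rule linear_on_eq_on_basis[OF fin(2) _ _ _ v])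
    show "linear_on J (\<lambda>v. lin2 I J g (tvec (bv i) v))"
      by (simp add: linear_on_def tvec_vadd_right tvec_smul_right lin2_vadd lin2_smul)
    show "linear_on J (g (bv i))" using lin_right i by simp
    show "lin2 I J g (tvec (bv i) (bv j)) = g (bv i) (bv j)" if "j \<in> J" for j
      using lin2_bv[OF fin i that] by (simp add: bv_Tn)
  qed
  show ?thesis
  proof (rule linear_on_eq_on_basis[OF fin(1), where f = "\<lambda>u. lin2 I J g (tvec u v)"])
    show "linear_on I (\<lambda>u. lin2 I J g (tvec u v))"
      by (simp add: linear_on_def tvec_vadd_left tvec_smul_left lin2_vadd lin2_smul)
  qed (use lin_left v on_basis_left u in auto)
qed

lemma lin_on_lin3:
  "(\<And>i j k. i \<in> I \<Longrightarrow> j \<in> J \<Longrightarrow> k \<in> K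
   \<Longrightarrow> g (bv i) (bv j) (bv k) \<in> space L)
   \<Longrightarrow> lin_on (tidx (tidx I J) K) L (lin3 I J K g)"
  unfolding lin_on_def lin3_def vadd_def smul_def space_def
  by (auto simp: sum.distrib sum_distrib_left algebra_simps intro!: sum.neutral)

lemma lin3_bv:
  assumes "finite I" "finite J" "finite K" "i \<in> I" "j \<in> J" "k \<in> K"
  shows "lin3 I J K g (bv (Tn (Tn i j) k)) = g (bv i) (bv j) (bv k)"
proof
  fix t
  have "lin3 I J K g (bv (Tn (Tn i j) k)) t
      = (\<Sum>p\<in>I \<times> J \<times> K. if p = (i, j, k) then g (bv i) (bv j) (bv k) t else 0)"
    unfolding lin3_def by (intro sum.cong) (auto simp: bv_def)
  then show "lin3 I J K g (bv (Tn (Tn i j) k)) t = g (bv i) (bv j) (bv k) t" using assms by simp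
qed

lemma linear_on_tmap [simp]: "linear_on (tidx I J) (tmap I J f g)"
  by (simp add: tmap_def)

lemma lin_on_tmap [simp]:
  "lin_on I I' f \<Longrightarrow> lin_on J J' g
   \<Longrightarrow> lin_on (tidx I J) (tidx I' J') (tmap I J f g)"
  unfolding tmap_def by (rule lin_on_lin2) (simp add: lin_onD)

lemma tmap_in_space [simp]:
  "lin_on I I' f \<Longrightarrow> lin_on J J' g \<Longrightarrow> tmap I J f g w \<in> space (tidx I' J')"
  unfolding tmap_def by (rule lin2_in_space) (simp add: lin_onD)

lemma lin_on_tmap_comp:
  "lin_on I (tidx A B) F \<Longrightarrow> lin_on A A' f \<Longrightarrow> lin_on B B' g
   \<Longrightarrow> lin_on I (tidx A' B') (\<lambda>v. tmap A B f g (F v))"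
  by (rule lin_on_comp[OF _ lin_on_tmap])

lemmas lin_on_intros = lin_on_ident lin_on_id lin_on_tmap lin_on_assocL lin_on_assocR
  lin_on_tmap_comp lin_on_assocL_comp lin_on_assocR_comp lin_on_tvec_left_comp lin_on_tvec_right_comp

lemma tmap_tvec [simp]:
  fixes f g :: "'k::comm_ring_1 vec \<Rightarrow> 'k vec"
  assumes "finite I" "finite J" "linear_on I f" "linear_on J g" "u \<in> space I" "v \<in> space J"
  shows "tmap I J f g (tvec u v) = tvec (f u) (g v)"
  unfolding tmap_def
  by (rule lin2_tvec) (use assms in \<open>auto simp: linear_on_def tvec_linear\<close>)

lemma tmap_cong:
  "(\<And>i. i \<in> I \<Longrightarrow> f (bv i) = f' (bv i)) \<Longrightarrow> (\<And>j. j \<in> J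
   \<Longrightarrow> g (bv j) = g' (bv j))
   \<Longrightarrow> tmap I J f g = tmap I J f' g'"
  unfolding tmap_def lin2_def by (intro ext sum.cong) auto

lemma lin_on_eq_on_basis:
  assumes "finite I" "lin_on I J f" "lin_on I K g" "\<And>i. i \<in> I \<Longrightarrow> f (bv i) = g (bv i)"
    and "v \<in> space I"
  shows "f v = g v"
  using linear_on_eq_on_basis[OF assms(1) lin_on_linear_on[OF assms(2)]
      lin_on_linear_on[OF assms(3)] assms(4,5)] .

lemma lin_on_eq_on_tvec:
  assumes "finite I" "finite J" "lin_on (tidx I J) K f" "lin_on (tidx I J) L g"
    "\<And>i j. i \<in> I \<Longrightarrow> j \<in> J
     \<Longrightarrow> f (tvec (bv i) (bv j)) = g (tvec (bv i) (bv j))"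
    and "v \<in> space (tidx I J)"
  shows "f v = g v"
proof (rule lin_on_eq_on_basis[OF _ assms(3,4) _ assms(6)])
  fix t assume "t \<in> tidx I J"
  then obtain i j where "t = Tn i j" "i \<in> I" "j \<in> J" by (auto simp: tidx_def)
  then show "f (bv t) = g (bv t)" using assms(5) by (simp add: bv_Tn)
qed (simp add: assms)

lemma lin_on_eq_on_tvec3:
  assumes "finite I" "finite J" "finite M"
    "lin_on (tidx (tidx I J) M) K f" "lin_on (tidx (tidx I J) M) L g"
    "\<And>i j m. i \<in> I \<Longrightarrow> j \<in> J \<Longrightarrow> m \<in> M \<Longrightarrow>
      f (tvec (tvec (bv i) (bv j)) (bv m)) = g (tvec (tvec (bv i) (bv j)) (bv m))"
    and "v \<in> space (tidx (tidx I J) M)"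
  shows "f v = g v"
proof (rule lin_on_eq_on_basis[OF _ assms(4,5) _ assms(7)])
  fix t assume "t \<in> tidx (tidx I J) M"
  then obtain i j m where "t = Tn (Tn i j) m" "i \<in> I" "j \<in> J" "m \<in> M" by (auto simp: tidx_def)
  then show "f (bv t) = g (bv t)" using assms(6) by (simp add: bv_Tn)
qed (simp add: assms)

lemma lin_on_eq_on_tvec3_right:
  assumes "finite I" "finite J" "finite M"
    "lin_on (tidx I (tidx J M)) K f" "lin_on (tidx I (tidx J M)) L g"
    "\<And>i j m. i \<in> I \<Longrightarrow> j \<in> J \<Longrightarrow> m \<in> M \<Longrightarrow>
      f (tvec (bv i) (tvec (bv j) (bv m))) = g (tvec (bv i) (tvec (bv j) (bv m)))"
    and "v \<in> space (tidx I (tidx J M))"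
  shows "f v = g v"
proof (rule lin_on_eq_on_basis[OF _ assms(4,5) _ assms(7)])
  fix t assume "t \<in> tidx I (tidx J M)"
  then obtain i j m where "t = Tn i (Tn j m)" "i \<in> I" "j \<in> J" "m \<in> M" by (auto simp: tidx_def)
  then show "f (bv t) = g (bv t)" using assms(6) by (simp add: bv_Tn)
qed (simp add: assms)

lemma tmap_comp:
  fixes f f' g g' :: "'k::comm_ring_1 vec \<Rightarrow> 'k vec"
  assumes fin: "finite I" "finite J" "finite I'" "finite J'"
    and lin: "lin_on I I' f'" "lin_on J J' g'" "lin_on I' I'' f" "lin_on J' J'' g"
    and w: "w \<in> space (tidx I J)"
  shows "tmap I' J' f g (tmap I J f' g' w) = tmap I J (\<lambda>x. f (f' x)) (\<lambda>y. g (g' y)) w"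
proof (rule lin_on_eq_on_tvec[OF fin(1,2) _ _ _ w])
  show "lin_on (tidx I J) (tidx I'' J'') (\<lambda>w. tmap I' J' f g (tmap I J f' g' w))"
    by (intro lin_on_intros lin)
  show "lin_on (tidx I J) (tidx I'' J'') (tmap I J (\<lambda>x. f (f' x)) (\<lambda>y. g (g' y)))"
    by (rule lin_on_tmap[OF lin_on_comp[OF lin(1,3)] lin_on_comp[OF lin(2,4)]])
  fix i j assume ij: "i \<in> I" "j \<in> J"
  have "f' (bv i) \<in> space I'" "g' (bv j) \<in> space J'" using lin ij by (auto simp: lin_onD)
  moreover have "linear_on I' f" "linear_on J' g" "linear_on I f'" "linear_on J g'"
    "linear_on I (\<lambda>x. f (f' x))" "linear_on J (\<lambda>y. g (g' y))"
    using lin lin_on_comp[OF lin(1,3)] lin_on_comp[OF lin(2,4)] by (auto intro: lin_on_linear_on)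
  ultimately show "tmap I' J' f g (tmap I J f' g' (tvec (bv i) (bv j)))
      = tmap I J (\<lambda>x. f (f' x)) (\<lambda>y. g (g' y)) (tvec (bv i) (bv j))"
    using fin ij by simp
qed

lemma tmap_id:
  assumes "finite I" "finite J" "w \<in> space (tidx I J)"
  shows "tmap I J id id w = (w :: 'k::comm_ring_1 vec)"
proof (rule lin_on_eq_on_tvec[OF assms(1,2) _ lin_on_ident _ assms(3)])
  show "lin_on (tidx I J) (tidx I J) (tmap I J id (id :: 'k vec \<Rightarrow> _))" by simp
qed (use assms in simp)

lemma tmap_comp_cong:
  fixes f f' g g' :: "'k::comm_ring_1 vec \<Rightarrow> 'k vec"
  assumes "finite I" "finite J" "finite I'" "finite J'"
    and "lin_on I I' f'" "lin_on J J' g'" "lin_on I' I'' f" "lin_on J' J'' g"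
    and "\<And>v. v \<in> space I \<Longrightarrow> f (f' v) = F v" and "\<And>v. v \<in> space J \<Longrightarrow> g (g' v) = G v"
    and "w \<in> space (tidx I J)"
  shows "tmap I' J' f g (tmap I J f' g' w) = tmap I J F G w"
  using tmap_comp[OF assms(1-8,11)] tmap_cong[of I "\<lambda>x. f (f' x)" F J "\<lambda>y. g (g' y)" G] assms(9,10)
  by simp

lemma tmap_inverse:
  fixes f f' g g' :: "'k::comm_ring_1 vec \<Rightarrow> 'k vec"
  assumes "finite I" "finite J" "lin_on I I f" "lin_on J J g" "lin_on I I f'" "lin_on J J g'"
    and "\<And>v. v \<in> space I \<Longrightarrow> f' (f v) = v" and "\<And>v. v \<in> space J \<Longrightarrow> g' (g v) = v"
    and "w \<in> space (tidx I J)"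
  shows "tmap I J f' g' (tmap I J f g w) = w"
  using tmap_comp_cong[OF assms(1,2,1,2,3-6), of id id] tmap_id[OF assms(1,2,9)] assms(7-9)
  by simp

lemma tmap_inj:
  fixes f f' g g' :: "'k::comm_ring_1 vec \<Rightarrow> 'k vec"
  assumes "finite I" "finite J" "lin_on I I f" "lin_on J J g" "lin_on I I f'" "lin_on J J g'"
    and "\<And>v. v \<in> space I \<Longrightarrow> f' (f v) = v" and "\<And>v. v \<in> space J \<Longrightarrow> g' (g v) = v"
    and "V \<in> space (tidx I J)" "V' \<in> space (tidx I J)" "tmap I J f g V = tmap I J f g V'"
  shows "V = V'"
  by (metis assms tmap_inverse)

lemma assocL_tvec_tmap:
  fixes f g k :: "'k::comm_ring_1 vec \<Rightarrow> 'k vec"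
  assumes fin: "finite I" "finite J" "finite K"
    and lin: "lin_on J J' g" "lin_on K K' k" "lin_on I I' f"
    and u: "u \<in> space I" and Z: "Z \<in> space (tidx J K)"
  shows "assocL (tvec (f u) (tmap J K g k Z)) = tmap (tidx I J) K (tmap I J f g) k (assocL (tvec u Z))"
proof (rule lin_on_eq_on_tvec[OF fin(2,3) _ _ _ Z])
  show "lin_on (tidx J K) (tidx (tidx I' J') K') (\<lambda>Z. assocL (tvec (f u) (tmap J K g k Z)))"
    by (intro lin_on_intros lin lin_onD[OF lin(3) u])
  show "lin_on (tidx J K) (tidx (tidx I' J') K')
      (\<lambda>Z. tmap (tidx I J) K (tmap I J f g) k (assocL (tvec u Z)))"
    by (intro lin_on_intros lin u)
qed (use fin lin u in \<open>simp add: lin_on_linear_on[OF lin(1)] lin_on_linear_on[OF lin(2)]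
    lin_on_linear_on[OF lin(3)]\<close>)

section \<open>Objects and integer powers of their structure maps\<close>

lemma is_obj_finite: "is_obj I a \<Longrightarrow> finite I"
  by (simp add: is_obj_def)

lemma is_obj_lin_on: "is_obj I a \<Longrightarrow> lin_on I I a"
  by (simp add: is_obj_def)

lemmas is_obj_facts =
  is_obj_finite is_obj_lin_on is_obj_lin_on[THEN lin_on_linear_on] is_obj_lin_on[THEN lin_onD]

lemma obj_apply_inv:
  "is_obj I a \<Longrightarrow> v \<in> space I \<Longrightarrow> a (inv_into (space I) a v) = v"
  by (metis bij_betw_def f_inv_into_f is_obj_def)

lemma obj_inv_apply:
  "is_obj I a \<Longrightarrow> v \<in> space I \<Longrightarrow> inv_into (space I) a (a v) = v"
  by (meson bij_betw_inv_into_left is_obj_def)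

lemma lin_on_obj_inv:
  fixes a :: "'k::comm_ring_1 vec \<Rightarrow> 'k vec"
  assumes obj: "is_obj I a"
  shows "lin_on I I (inv_into (space I) a)"
proof -
  let ?g = "inv_into (space I) a"
  have bij: "bij_betw a (space I) (space I)" and lin: "lin_on I I a"
    using obj by (simp_all add: is_obj_def)
  have g_in: "?g v \<in> space I" if "v \<in> space I" for v
    using bij that by (metis bij_betw_def inv_into_into)
  have inj: "inj_on a (space I)" using bij by (simp add: bij_betw_def)
  show ?thesis unfolding lin_on_def
  proof (intro conjI ballI allI)
    fix v w :: "'k vec" assume vw: "v \<in> space I" "w \<in> space I"
    have "a (vadd (?g v) (?g w)) = vadd v w"
      using lin vw g_in obj_apply_inv[OF obj] unfolding lin_on_def by simp
    then show "?g (vadd v w) = vadd (?g v) (?g w)"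
      using inj vw g_in by (metis inv_into_f_f vadd_in_space)
  next
    fix c and v :: "'k vec" assume v: "v \<in> space I"
    have "a (smul c (?g v)) = smul c v"
      using lin v g_in obj_apply_inv[OF obj] unfolding lin_on_def by simp
    then show "?g (smul c v) = smul c (?g v)"
      using inj v g_in by (metis inv_into_f_f smul_in_space)
  qed (rule g_in)
qed

lemma lin_on_zpow:
  fixes a :: "'k::comm_ring_1 vec \<Rightarrow> 'k vec"
  assumes "is_obj I a"
  shows "lin_on I I (zpow I a m)"
proof -
  have "lin_on I I (f ^^ k)" if "lin_on I I f" for f :: "'k vec \<Rightarrow> 'k vec" and k
    by (induction k) (simp_all add: lin_on_ident lin_on_comp[OF _ that])
  then show ?thesis
    unfolding zpow_def using is_obj_lin_on[OF assms] lin_on_obj_inv[OF assms] by simp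
qed

lemma zpow_in_space:
  "is_obj I a \<Longrightarrow> v \<in> space I \<Longrightarrow> zpow I a m v \<in> space I"
  by (rule lin_onD[OF lin_on_zpow])

lemma zpow_0 [simp]: "zpow I a 0 = id"
  by (simp add: zpow_def)

lemma zpow_1: "zpow I a 1 = a"
  by (simp add: zpow_def)

lemma zpow_minus_1: "zpow I a (-1) = inv_into (space I) a"
  by (simp add: zpow_def)

lemma zpow_succ:
  assumes obj: "is_obj I a" and v: "v \<in> space I"
  shows "zpow I a (m + 1) v = a (zpow I a m v)"
proof (cases "0 \<le> m")
  case True
  then have "nat (m + 1) = Suc (nat m)" by simp
  then show ?thesis using True by (simp add: zpow_def)
next
  case False
  then have "nat (- m) = Suc (nat (- (m + 1)))" by simp
  then have "zpow I a m v = inv_into (space I) a (zpow I a (m + 1) v)"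
    using False by (simp add: zpow_def)
  then show ?thesis using obj_apply_inv[OF obj zpow_in_space[OF obj v]] by simp
qed

lemma zpow_pred:
  assumes obj: "is_obj I a" and v: "v \<in> space I"
  shows "zpow I a (m - 1) v = inv_into (space I) a (zpow I a m v)"
  using zpow_succ[OF obj v, of "m - 1"] obj_inv_apply[OF obj zpow_in_space[OF obj v]] by simp

lemma zpow_add:
  assumes obj: "is_obj I a" and v: "v \<in> space I"
  shows "zpow I a m (zpow I a k v) = zpow I a (m + k) v"
proof (induction m rule: int_induct[where k = 0])
  case (step1 i)
  then show ?case
    using zpow_succ[OF obj zpow_in_space[OF obj v], of i] zpow_succ[OF obj v, of "i + k"]
    by (simp add: ac_simps)
next
  case (step2 i)
  then show ?case
    using zpow_pred[OF obj zpow_in_space[OF obj v], of i] zpow_pred[OF obj v, of "i + k"]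
    by (simp add: algebra_simps)
qed simp

lemma zpow_intertwine:
  assumes obj_a: "is_obj I a" and obj_b: "is_obj J b" and F: "lin_on I J F"
    and comm: "\<And>v. v \<in> space I \<Longrightarrow> F (a v) = b (F v)" and v: "v \<in> space I"
  shows "F (zpow I a m v) = zpow J b m (F v)"
  using v
proof (induction m arbitrary: v rule: int_induct[where k = 0])
  case (step1 i)
  then show ?case
    using zpow_succ[OF obj_a step1.prems, of i] zpow_succ[OF obj_b lin_onD[OF F step1.prems], of i]
      comm[OF zpow_in_space[OF obj_a step1.prems]]
    by simp
next
  case (step2 i)
  have Fv: "F v \<in> space J" using F step2.prems by (rule lin_onD)
  have prev: "zpow I a (i - 1) v \<in> space I" using zpow_in_space[OF obj_a step2.prems] .
  have "F (zpow I a i v) = b (F (zpow I a (i - 1) v))"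
    using comm[OF prev] zpow_succ[OF obj_a step2.prems, of "i - 1"] by simp
  then have "inv_into (space J) b (F (zpow I a i v)) = F (zpow I a (i - 1) v)"
    using obj_inv_apply[OF obj_b lin_onD[OF F prev]] by simp
  then show ?case using step2 zpow_pred[OF obj_b Fv, of i] by simp
qed simp

lemma is_obj_tmap:
  fixes a b :: "'k::comm_ring_1 vec \<Rightarrow> 'k vec"
  assumes obj_a: "is_obj I a" and obj_b: "is_obj J b"
  shows "is_obj (tidx I J) (tmap I J a b)"
    and "w \<in> space (tidx I J) \<Longrightarrow> inv_into (space (tidx I J)) (tmap I J a b) w
          = tmap I J (inv_into (space I) a) (inv_into (space J) b) w"
proof -
  let ?ga = "inv_into (space I) a" and ?gb = "inv_into (space J) b"
  have fin: "finite I" "finite J" using obj_a obj_b by (auto simp: is_obj_finite)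
  have lin: "lin_on I I a" "lin_on J J b" "lin_on I I ?ga" "lin_on J J ?gb"
    using obj_a obj_b by (auto simp: is_obj_lin_on lin_on_obj_inv)
  have left: "tmap I J ?ga ?gb (tmap I J a b w) = w" if "w \<in> space (tidx I J)" for w
    by (rule tmap_inverse[OF fin lin _ _ that]) (simp_all add: obj_inv_apply obj_a obj_b)
  have right: "tmap I J a b (tmap I J ?ga ?gb w) = w" if "w \<in> space (tidx I J)" for w
    by (rule tmap_inverse[OF fin lin(3,4,1,2) _ _ that]) (simp_all add: obj_apply_inv obj_a obj_b)
  have bij: "bij_betw (tmap I J a b) (space (tidx I J)) (space (tidx I J))"
    by (rule bij_betw_byWitness[where f' = "tmap I J ?ga ?gb"])
      (use left right lin in \<open>auto simp: lin_onD\<close>)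
  show "is_obj (tidx I J) (tmap I J a b)"
    unfolding is_obj_def using fin lin bij by simp
  assume w: "w \<in> space (tidx I J)"
  show "inv_into (space (tidx I J)) (tmap I J a b) w = tmap I J ?ga ?gb w"
    by (rule inv_into_f_eq) (use bij w right lin in \<open>auto simp: bij_betw_def\<close>)
qed

lemma zpow_tmap:
  fixes a b :: "'k::comm_ring_1 vec \<Rightarrow> 'k vec"
  assumes obj_a: "is_obj I a" and obj_b: "is_obj J b" and w: "w \<in> space (tidx I J)"
  shows "zpow (tidx I J) (tmap I J a b) m w = tmap I J (zpow I a m) (zpow J b m) w"
  using w
proof (induction m arbitrary: w rule: int_induct[where k = 0])
  have fin: "finite I" "finite J" using obj_a obj_b by (auto simp: is_obj_finite)
  case base
  show ?case using tmap_id[OF fin base] by (simp add: id_def)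
next
  have fin: "finite I" "finite J" using obj_a obj_b by (auto simp: is_obj_finite)
  have lin: "lin_on I I a" "lin_on J J b" "lin_on I I (zpow I a i)" "lin_on J J (zpow J b i)" for i
    using obj_a obj_b by (auto simp: is_obj_lin_on lin_on_zpow)
  case (step1 i)
  have "zpow (tidx I J) (tmap I J a b) (i + 1) w = tmap I J a b (zpow (tidx I J) (tmap I J a b) i w)"
    by (rule zpow_succ[OF is_obj_tmap(1)[OF obj_a obj_b] step1.prems])
  also have "\<dots> = tmap I J (zpow I a (i + 1)) (zpow J b (i + 1)) w"
    using step1 by (auto intro!: tmap_comp_cong[OF fin fin lin(3,4) lin(1,2)]
        simp: zpow_succ obj_a obj_b)
  finally show ?case .
next
  have fin: "finite I" "finite J" using obj_a obj_b by (auto simp: is_obj_finite)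
  have lin: "lin_on I I (inv_into (space I) a)" "lin_on J J (inv_into (space J) b)"
    "lin_on I I (zpow I a i)" "lin_on J J (zpow J b i)" for i
    using obj_a obj_b by (auto simp: lin_on_obj_inv lin_on_zpow)
  case (step2 i)
  have obj_ab: "is_obj (tidx I J) (tmap I J a b)" by (rule is_obj_tmap(1)[OF obj_a obj_b])
  have "zpow (tidx I J) (tmap I J a b) (i - 1) w
      = inv_into (space (tidx I J)) (tmap I J a b) (zpow (tidx I J) (tmap I J a b) i w)"
    by (rule zpow_pred[OF obj_ab step2.prems])
  also have "\<dots> = tmap I J (inv_into (space I) a) (inv_into (space J) b)
      (tmap I J (zpow I a i) (zpow J b i) w)"
    using is_obj_tmap(2)[OF obj_a obj_b zpow_in_space[OF obj_ab step2.prems, of i]] step2 by simp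
  also have "\<dots> = tmap I J (zpow I a (i - 1)) (zpow J b (i - 1)) w"
    using step2 by (auto intro!: tmap_comp_cong[OF fin fin lin(3,4) lin(1,2)]
        simp: zpow_pred obj_a obj_b)
  finally show ?case .
qed

section \<open>The comonads \<open>- \<otimes> C\<close> and the unit object\<close>

definition twisted_comult :: "ix set \<Rightarrow> (('k::comm_ring_1) vec \<Rightarrow> 'k vec) \<Rightarrow> ('k vec \<Rightarrow> 'k vec)
    \<Rightarrow> 'k vec \<Rightarrow> 'k vec" where
  "twisted_comult C aC D c = tmap C C id (inv_into (space C) aC) (D c)"

lemma lin_on_twisted_comult:
  "is_obj C aC \<Longrightarrow> lin_on C (tidx C C) D
   \<Longrightarrow> lin_on C (tidx C C) (twisted_comult C aC D)"
  unfolding twisted_comult_def by (intro lin_on_intros lin_on_obj_inv)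

lemma linear_on_ccomult [simp]: "linear_on K (ccomult C aC D I a)"
  by (simp add: ccomult_def)

lemma linear_on_ccounit [simp]: "linear_on K (ccounit C e I a)"
  by (simp add: ccounit_def)

lemma ccomult_tvec:
  fixes aC D a :: "'k::comm_ring_1 vec \<Rightarrow> 'k vec"
  assumes fin: "finite I" "finite C" and D: "lin_on C (tidx C C) D"
    and a: "lin_on I I a" and x: "x \<in> space I" and c: "c \<in> space C"
  shows "ccomult C aC D I a (tvec x c) = assocL (tvec (a x) (twisted_comult C aC D c))"
  unfolding ccomult_def twisted_comult_def
proof (rule lin2_tvec[OF fin _ _ x c])
  fix v :: "'k vec"
  show "linear_on I (\<lambda>u. assocL (tvec (a u) (tmap C C id (inv_into (space C) aC) (D v))))"
    using a by (simp add: linear_on_def lin_on_def tvec_linear assocL_vadd assocL_smul)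
  show "linear_on C (\<lambda>v. assocL (tvec (a u) (tmap C C id (inv_into (space C) aC) (D v))))" for u
    using D by (simp add: linear_on_def lin_on_def tvec_linear assocL_vadd assocL_smul
        tmap_def lin2_vadd lin2_smul)
qed

lemma lin_on_ccomult:
  fixes aC D a :: "'k::comm_ring_1 vec \<Rightarrow> 'k vec"
  assumes "is_obj C aC" "lin_on C (tidx C C) D" "lin_on I I a"
  shows "lin_on (tidx I C) (tidx (tidx I C) C) (ccomult C aC D I a)"
  unfolding ccomult_def
  by (rule lin_on_lin2)
    (use assms lin_onD[OF lin_on_twisted_comult[OF assms(1,2)]] in
      \<open>auto simp: lin_onD twisted_comult_def\<close>)

lemma ccounit_tvec:
  fixes a :: "'k::comm_ring_1 vec \<Rightarrow> 'k vec"
  assumes fin: "finite I" "finite C" and e: "lin_functional C e" and obj: "is_obj I a"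
    and x: "x \<in> space I" and c: "c \<in> space C"
  shows "ccounit C e I a (tvec x c) = smul (e c) (inv_into (space I) a x)"
  unfolding ccounit_def
proof (rule lin2_tvec[OF fin _ _ x c])
  show "linear_on I (\<lambda>u. smul (e v) (inv_into (space I) a u))" for v
    using lin_on_obj_inv[OF obj] by (simp add: linear_on_def lin_on_def smul_vadd smul_commute)
  show "linear_on C (\<lambda>v. smul (e v) (inv_into (space I) a u))" for u
    using e by (simp add: linear_on_def lin_functional_def smul_add smul_mult)
qed

lemma lin_on_ccounit:
  fixes a :: "'k::comm_ring_1 vec \<Rightarrow> 'k vec"
  assumes "is_obj I a"
  shows "lin_on (tidx I C) I (ccounit C e I a)"
  unfolding ccounit_def by (rule lin_on_lin2) (simp add: lin_onD[OF lin_on_obj_inv[OF assms]])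

lemma is_obj_unit: "is_obj {Ix 0} (id :: 'k::comm_ring_1 vec \<Rightarrow> _)"
  by (simp add: is_obj_def)

lemma unit_inv_basis: "inv_into (space {Ix 0}) id (bv (Ix 0)) = (bv (Ix 0) :: 'k::comm_ring_1 vec)"
  using obj_inv_apply[OF is_obj_unit, of "bv (Ix 0) :: 'k vec"] by simp

abbreviation tvec_left_assoc :: "ix set \<Rightarrow> ix set \<Rightarrow> ix set \<Rightarrow> ix set
    \<Rightarrow> ('k::comm_ring_1) vec \<Rightarrow> 'k vec \<Rightarrow> 'k vec" where
  "tvec_left_assoc X J K L y Q \<equiv> tmap (tidx X (tidx J K)) L assocL id (assocL (tvec y Q))"

lemma tvec_left_assoc_assocL:
  fixes y R :: "'k::comm_ring_1 vec"
  assumes fin: "finite X" "finite J" "finite K" "finite L"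
    and y: "y \<in> space X" and R: "R \<in> space (tidx J (tidx K L))"
  shows "tvec_left_assoc X J K L y (assocL R) = assocL (assocL (tvec y R))"
proof (rule lin_on_eq_on_tvec3_right[OF fin(2-4) _ _ _ R])
  show "lin_on (tidx J (tidx K L)) (tidx (tidx (tidx X J) K) L)
      (\<lambda>R. tvec_left_assoc X J K L y (assocL R))"
    by (intro lin_on_intros y)
  show "lin_on (tidx J (tidx K L)) (tidx (tidx (tidx X J) K) L) (\<lambda>R. assocL (assocL (tvec y R)))"
    by (intro lin_on_intros y)
qed (use fin y in simp)

lemma tvec_left_assoc_basis_inj:
  fixes Q Q' :: "'k::comm_ring_1 vec"
  assumes fin: "finite X" "finite J" "finite K" "finite L" and i: "i \<in> X"
    and Q: "Q \<in> space (tidx (tidx J K) L)" and Q': "Q' \<in> space (tidx (tidx J K) L)"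
    and eq: "tvec_left_assoc X J K L (bv i) Q = tvec_left_assoc X J K L (bv i) Q'"
  shows "Q = Q'"
proof -
  have undo: "tmap (tidx (tidx X J) K) L assocR id (tvec_left_assoc X J K L (bv i) P)
      = assocL (tvec (bv i) P)"
    if P: "P \<in> space (tidx (tidx J K) L)" for P
  proof -
    have "tmap (tidx (tidx X J) K) L assocR id (tvec_left_assoc X J K L (bv i) P)
        = tmap (tidx X (tidx J K)) L id id (assocL (tvec (bv i) P))"
      by (rule tmap_comp_cong[OF _ _ _ _ lin_on_assocL lin_on_id lin_on_assocR lin_on_id])
        (use fin i P in simp_all)
    then show ?thesis using fin i P by (simp add: tmap_id)
  qed
  have "assocL (tvec (bv i) Q) = assocL (tvec (bv i) Q')"
    using undo[OF Q] undo[OF Q'] eq by metis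
  then have "assocR (assocL (tvec (bv i) Q)) = assocR (assocL (tvec (bv i) Q'))" by simp
  then have "tvec (bv i) Q = tvec (bv i) Q'"
    using assocR_assocL[OF tvec_in_space[OF bv_in_space[OF i] Q]]
      assocR_assocL[OF tvec_in_space[OF bv_in_space[OF i] Q']] by simp
  then show ?thesis by (rule tvec_basis_left_inj)
qed

section \<open>The candidate distributive law\<close>

locale twisting_map =
  fixes IB IH :: "ix set"
    and aB DB aH DH :: "('k::comm_ring_1) vec \<Rightarrow> 'k vec"
    and eB eH :: "'k vec \<Rightarrow> 'k"
    and phi :: "'k vec \<Rightarrow> 'k vec"
    and n :: int
  assumes coalg_B: "hom_coalgebra IB aB DB eB"
    and coalg_H: "hom_coalgebra IH aH DH eH"
    and lin_phi: "lin_on (tidx IB IH) (tidx IH IB) phi"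
    and phi_alpha: "\<forall>w\<in>space (tidx IB IH). phi (tmap IB IH aB aH w) = tmap IH IB aH aB (phi w)"
begin

abbreviation "zB m \<equiv> zpow IB aB m"
abbreviation "zH m \<equiv> zpow IH aH m"
abbreviation "gB \<equiv> inv_into (space IB) aB"
abbreviation "gH \<equiv> inv_into (space IH) aH"
abbreviation "DBt \<equiv> twisted_comult IB aB DB"
abbreviation "DHt \<equiv> twisted_comult IH aH DH"
abbreviation "Psi \<equiv> psi_n IB aB IH aH phi n"

lemma obj_B: "is_obj IB aB" and obj_H: "is_obj IH aH"
  using coalg_B coalg_H by (simp_all add: hom_coalgebra_def)

lemma finite_IB [simp]: "finite IB" and finite_IH [simp]: "finite IH"
  using obj_B obj_H by (simp_all add: is_obj_finite)

lemma lin_on_DB: "lin_on IB (tidx IB IB) DB" and lin_on_DH: "lin_on IH (tidx IH IH) DH"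
  using coalg_B coalg_H by (simp_all add: hom_coalgebra_def)

lemma lin_functional_eB: "lin_functional IB eB" and lin_functional_eH: "lin_functional IH eH"
  using coalg_B coalg_H by (simp_all add: hom_coalgebra_def)

lemma DB_aB: "v \<in> space IB \<Longrightarrow> DB (aB v) = tmap IB IB aB aB (DB v)"
  and DH_aH: "v \<in> space IH \<Longrightarrow> DH (aH v) = tmap IH IH aH aH (DH v)"
  and eB_aB: "v \<in> space IB \<Longrightarrow> eB (aB v) = eB v"
  and eH_aH: "v \<in> space IH \<Longrightarrow> eH (aH v) = eH v"
  using coalg_B coalg_H by (simp_all add: hom_coalgebra_def)

lemmas lin_on_maps [simp] =
  is_obj_lin_on[OF obj_B] is_obj_lin_on[OF obj_H] lin_on_obj_inv[OF obj_B] lin_on_obj_inv[OF obj_H]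
  lin_on_zpow[OF obj_B] lin_on_zpow[OF obj_H] lin_on_DB lin_on_DH lin_phi
  lin_on_twisted_comult[OF obj_B lin_on_DB] lin_on_twisted_comult[OF obj_H lin_on_DH]

lemmas maps_in_space [simp] = lin_on_maps[THEN lin_onD]

lemmas maps_linear_on [simp] = lin_on_maps[THEN lin_on_linear_on]

lemmas maps_smul [simp] = lin_on_maps[THEN lin_on_smul]

lemmas inverse_cancel [simp] =
  obj_apply_inv[OF obj_B] obj_inv_apply[OF obj_B] obj_apply_inv[OF obj_H] obj_inv_apply[OF obj_H]

lemma zpow_B_simps [simp]:
  "v \<in> space IB \<Longrightarrow> zB m (zB k v) = zB (m + k) v"
  "v \<in> space IB \<Longrightarrow> aB (zB k v) = zB (k + 1) v"
  "v \<in> space IB \<Longrightarrow> gB (zB k v) = zB (k - 1) v"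
  "v \<in> space IB \<Longrightarrow> zB k (aB v) = zB (k + 1) v"
  "v \<in> space IB \<Longrightarrow> zB k (gB v) = zB (k - 1) v"
  using zpow_add[OF obj_B, of v] zpow_add[OF obj_B, of v 1 k] zpow_add[OF obj_B, of v "-1" k]
    zpow_add[OF obj_B, of v k 1] zpow_add[OF obj_B, of v k "-1"]
  by (simp_all add: zpow_1 zpow_minus_1 add.commute)

lemmas zpow_1_minus_1 [simp] = zpow_1 zpow_minus_1

lemma eB_zpow [simp]: "v \<in> space IB \<Longrightarrow> eB (zB m v) = eB v"
proof (induction m arbitrary: v rule: int_induct[where k = 0])
  case (step1 i)
  then show ?case using eB_aB[of "zB i v"] by simp
next
  case (step2 i)
  then show ?case using eB_aB[of "zB (i - 1) v"] by simp
qed simp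

lemma eH_gH [simp]: "v \<in> space IH \<Longrightarrow> eH (gH v) = eH v"
  using eH_aH[of "gH v"] by simp

lemma DB_zpow: "v \<in> space IB \<Longrightarrow> DB (zB m v) = tmap IB IB (zB m) (zB m) (DB v)"
  using zpow_intertwine[OF obj_B is_obj_tmap(1)[OF obj_B obj_B] lin_on_DB DB_aB]
    zpow_tmap[OF obj_B obj_B] by simp

lemma phi_zpow:
  assumes w: "w \<in> space (tidx IB IH)"
  shows "phi (tmap IB IH (zB m) (zH m) w) = tmap IH IB (zH m) (zB m) (phi w)"
proof -
  have "phi (zpow (tidx IB IH) (tmap IB IH aB aH) m w) = zpow (tidx IH IB) (tmap IH IB aH aB) m (phi w)"
    by (rule zpow_intertwine[OF is_obj_tmap(1)[OF obj_B obj_H] is_obj_tmap(1)[OF obj_H obj_B] lin_phi _ w])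
      (use phi_alpha in auto)
  then show ?thesis using zpow_tmap[OF obj_B obj_H w] zpow_tmap[OF obj_H obj_B lin_onD[OF lin_phi w]]
    by simp
qed

lemma phi_gB_tvec:
  "q \<in> space IB \<Longrightarrow> h \<in> space IH
   \<Longrightarrow> phi (tvec (gB q) h) = tmap IH IB gH gB (phi (tvec q (aH h)))"
  using phi_zpow[of "tvec q (aH h)" "-1"] by (simp add: zpow_minus_1)

lemma phi_aB_tvec:
  "c \<in> space IB \<Longrightarrow> p \<in> space IH
   \<Longrightarrow> phi (tvec (aB c) (aH p)) = tmap IH IB aH aB (phi (tvec c p))"
  using phi_alpha[rule_format, of "tvec c p"] by simp

lemma tmap_id_zpow_aB:
  "W \<in> space (tidx IH IB)
   \<Longrightarrow> tmap IH IB id (zB m) (tmap IH IB aH aB W) = tmap IH IB aH (zB (m + 1)) W"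
  by (rule tmap_comp_cong[where I''=IH and J''=IB]) simp_all

lemma DBt_zpow: "v \<in> space IB \<Longrightarrow> DBt (zB m v) = tmap IB IB (zB m) (zB (m - 1)) (DB v)"
  unfolding twisted_comult_def DB_zpow by (rule tmap_comp_cong[where I''=IB and J''=IB]) simp_all

lemma DHt_aH: "v \<in> space IH \<Longrightarrow> DHt (aH v) = tmap IH IH aH id (DH v)"
  unfolding twisted_comult_def DH_aH by (rule tmap_comp_cong[where I''=IH and J''=IH]) simp_all

definition phi_tw :: "'k vec \<Rightarrow> 'k vec" where
  "phi_tw w = tmap IH IB id (zB n) (phi (tmap IB IH (zB (- n - 1)) aH w))"

lemma lin_on_phi_tw [simp]: "lin_on (tidx IB IH) (tidx IH IB) phi_tw"
proof -
  have "lin_on (tidx IB IH) (tidx IH IB) (\<lambda>w. tmap IH IB id (zB n) (phi (tmap IB IH (zB (- n - 1)) aH w)))"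
    by (intro lin_on_tmap_comp lin_on_comp[OF _ lin_phi] lin_on_tmap lin_on_maps lin_on_id)
  then show ?thesis unfolding phi_tw_def[abs_def] .
qed

lemmas linear_on_phi_tw [simp] = lin_on_phi_tw[THEN lin_on_linear_on]

lemma phi_tw_tvec [simp]:
  "b \<in> space IB \<Longrightarrow> h \<in> space IH
   \<Longrightarrow> phi_tw (tvec b h) = tmap IH IB id (zB n) (phi (tvec (zB (- n - 1) b) (aH h)))"
  by (simp add: phi_tw_def)

lemmas lin_on_locale_intros =
  lin_on_comp[OF _ lin_on_phi_tw] lin_on_comp[OF _ lin_phi] lin_on_comp[OF _ lin_on_zpow[OF obj_B]]
  lin_on_comp[OF _ lin_on_obj_inv[OF obj_H]] lin_on_phi_tw lin_on_maps

lemma lin_on_psi_n [simp]: "lin_on (tidx (tidx I IB) IH) (tidx (tidx I IH) IB) (Psi I a)"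
  unfolding psi_n_def by (rule lin_on_lin3) (simp add: lin_onD)

lemmas linear_on_psi_n [simp] = lin_on_psi_n[THEN lin_on_linear_on]

lemma lin_on_psi_n_comp:
  "lin_on J (tidx (tidx I IB) IH) F
   \<Longrightarrow> lin_on J (tidx (tidx I IH) IB) (\<lambda>v. Psi I a (F v))"
  by (rule lin_on_comp[OF _ lin_on_psi_n])

lemma psi_n_eq:
  assumes I: "finite I" and w: "w \<in> space (tidx (tidx I IB) IH)"
  shows "Psi I a w = assocL (tmap I (tidx IB IH) id phi_tw (assocR w))"
proof (rule lin_on_eq_on_tvec3[OF I finite_IB finite_IH lin_on_psi_n _ _ w])
  show "lin_on (tidx (tidx I IB) IH) (tidx (tidx I IH) IB)
      (\<lambda>w. assocL (tmap I (tidx IB IH) id phi_tw (assocR w)))"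
    by (intro lin_on_intros lin_on_locale_intros)
  fix i j k assume ijk: "i \<in> I" "j \<in> IB" "k \<in> IH"
  have "Psi I a (bv (Tn (Tn i j) k))
      = assocL (tvec (bv i) (tmap IH IB id (zB n) (phi (tvec (zB (- n - 1) (bv j)) (aH (bv k))))))"
    unfolding psi_n_def by (rule lin3_bv[OF I finite_IB finite_IH ijk])
  then show "Psi I a (tvec (tvec (bv i) (bv j)) (bv k))
      = assocL (tmap I (tidx IB IH) id phi_tw (assocR (tvec (tvec (bv i) (bv j)) (bv k))))"
    using ijk I by (simp add: bv_Tn)
qed

lemma psi_n_tvec [simp]:
  "finite I \<Longrightarrow> x \<in> space I \<Longrightarrow> b \<in> space IB
   \<Longrightarrow> h \<in> space IH
   \<Longrightarrow> Psi I a (tvec (tvec x b) h) = assocL (tvec x (phi_tw (tvec b h)))"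
  by (simp add: psi_n_eq)

lemma psi_n_is_hom:
  assumes obj: "is_obj I a"
  shows "is_hom (tidx (tidx I IB) IH) (tmap (tidx I IB) IH (tmap I IB a aB) aH)
      (tidx (tidx I IH) IB) (tmap (tidx I IH) IB (tmap I IH a aH) aB) (Psi I a)"
  unfolding is_hom_def
proof (intro conjI ballI lin_on_psi_n)
  have I: "finite I" and a: "lin_on I I a" using obj by (simp_all add: is_obj_finite is_obj_lin_on)
  fix v :: "'k vec" assume v: "v \<in> space (tidx (tidx I IB) IH)"
  show "Psi I a (tmap (tidx I IB) IH (tmap I IB a aB) aH v)
      = tmap (tidx I IH) IB (tmap I IH a aH) aB (Psi I a v)"
  proof (rule lin_on_eq_on_tvec3[OF I finite_IB finite_IH _ _ _ v])
    show "lin_on (tidx (tidx I IB) IH) (tidx (tidx I IH) IB)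
        (\<lambda>v. Psi I a (tmap (tidx I IB) IH (tmap I IB a aB) aH v))"
      by (intro lin_on_psi_n_comp lin_on_intros a lin_on_maps)
    show "lin_on (tidx (tidx I IB) IH) (tidx (tidx I IH) IB)
        (\<lambda>v. tmap (tidx I IH) IB (tmap I IH a aH) aB (Psi I a v))"
      by (intro lin_on_tmap_comp lin_on_psi_n lin_on_tmap a lin_on_maps)
    fix i j k assume ijk: "i \<in> I" "j \<in> IB" "k \<in> IH"
    let ?W = "phi (tvec (zB (- n - 1) (bv j)) (aH (bv k)))"
    have "phi (tvec (zB (- n) (bv j)) (aH (aH (bv k)))) = tmap IH IB aH aB ?W"
      using phi_aB_tvec[of "zB (- n - 1) (bv j)" "aH (bv k)"] ijk by simp
    moreover have "tmap IH IB aH aB (tmap IH IB id (zB n) ?W) = tmap IH IB aH (zB (n + 1)) ?W"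
      by (rule tmap_comp_cong[where I''=IH and J''=IB]) (use ijk in simp_all)
    moreover have "assocL (tvec (a (bv i)) (tmap IH IB aH aB (phi_tw (tvec (bv j) (bv k)))))
       = tmap (tidx I IH) IB (tmap I IH a aH) aB (assocL (tvec (bv i) (phi_tw (tvec (bv j) (bv k)))))"
      by (rule assocL_tvec_tmap[where I'=I and J'=IH and K'=IB]) (use ijk I a in simp_all)
    ultimately show "Psi I a (tmap (tidx I IB) IH (tmap I IB a aB) aH (tvec (tvec (bv i) (bv j)) (bv k)))
        = tmap (tidx I IH) IB (tmap I IH a aH) aB (Psi I a (tvec (tvec (bv i) (bv j)) (bv k)))"
      using ijk is_obj_facts[OF obj] by (simp add: tmap_id_zpow_aB)
  qed
qed

lemma psi_n_natural:
  assumes obj_a: "is_obj I a" and obj_b: "is_obj J b" and f: "is_hom I a J b f"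
    and w: "w \<in> space (tidx (tidx I IB) IH)"
  shows "Psi J b (tmap (tidx I IB) IH (tmap I IB f id) id w)
      = tmap (tidx I IH) IB (tmap I IH f id) id (Psi I a w)"
proof -
  have lin_f: "lin_on I J f" using f by (simp add: is_hom_def)
  have fin: "finite I" "finite J" using obj_a obj_b by (simp_all add: is_obj_finite)
  show ?thesis
  proof (rule lin_on_eq_on_tvec3[OF fin(1) finite_IB finite_IH _ _ _ w])
    show "lin_on (tidx (tidx I IB) IH) (tidx (tidx J IH) IB)
        (\<lambda>w. Psi J b (tmap (tidx I IB) IH (tmap I IB f id) id w))"
      by (intro lin_on_psi_n_comp lin_on_intros lin_f)
    show "lin_on (tidx (tidx I IB) IH) (tidx (tidx J IH) IB)
        (\<lambda>w. tmap (tidx I IH) IB (tmap I IH f id) id (Psi I a w))"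
      by (intro lin_on_tmap_comp lin_on_psi_n lin_on_tmap lin_f lin_on_id)
    fix i j k assume ijk: "i \<in> I" "j \<in> IB" "k \<in> IH"
    have "assocL (tvec (f (bv i)) (tmap IH IB id id (phi_tw (tvec (bv j) (bv k)))))
       = tmap (tidx I IH) IB (tmap I IH f id) id (assocL (tvec (bv i) (phi_tw (tvec (bv j) (bv k)))))"
      by (rule assocL_tvec_tmap[where I'=J and J'=IH and K'=IB]) (use ijk fin lin_f in simp_all)
    then show "Psi J b (tmap (tidx I IB) IH (tmap I IB f id) id (tvec (tvec (bv i) (bv j)) (bv k)))
        = tmap (tidx I IH) IB (tmap I IH f id) id (Psi I a (tvec (tvec (bv i) (bv j)) (bv k)))"
      using ijk fin lin_onD[OF lin_f] lin_on_linear_on[OF lin_f] by (simp add: tmap_id)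
  qed
qed

end

context twisting_map
begin

abbreviation "M1_lhs b h \<equiv>
  tmap (tidx IB IH) IB phi id (assocL (tmap IB (tidx IB IH) id phi (assocR (tvec (DB b) (aH h)))))"
abbreviation "M1_rhs b h \<equiv> assocL (tmap IH IB aH DB (phi (tvec b h)))"

abbreviation "M2_lhs b h \<equiv>
  assocL (tmap IH (tidx IB IH) id phi (assocR (tmap (tidx IB IH) IH phi id (assocL (tvec (aB b) (DH h))))))"
abbreviation "M2_rhs b h \<equiv> tmap IH IB DH aB (phi (tvec b h))"

abbreviation "M3_lhs b h \<equiv> lin2 IH IB (\<lambda>y x. smul (eH y) x) (phi (tvec b h))"
abbreviation "M3_rhs b h \<equiv> smul (eH h) b"

abbreviation "M4_lhs b h \<equiv> lin2 IH IB (\<lambda>y x. smul (eB x) y) (phi (tvec b h))"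
abbreviation "M4_rhs b h \<equiv> smul (eB b) h"

subsection \<open>Compatibility with the comultiplication of \<open>B\<close>\<close>

abbreviation "iso_M1 \<equiv> tmap (tidx IH IB) IB (tmap IH IB id (zB n)) (zB (n - 1))"

lemma iso_M1_inj:
  assumes "V \<in> space (tidx (tidx IH IB) IB)" "V' \<in> space (tidx (tidx IH IB) IB)" "iso_M1 V = iso_M1 V'"
  shows "V = V'"
proof (rule tmap_inj[where f' = "tmap IH IB id (zB (- n))" and g' = "zB (1 - n)",
      OF _ finite_IB _ _ _ _ _ _ assms])
  show "tmap IH IB id (zB (- n)) (tmap IH IB id (zB n) v) = v" if "v \<in> space (tidx IH IB)" for v
    by (rule tmap_inverse[OF finite_IH finite_IB _ _ _ _ _ _ that]) simp_all
qed (simp_all add: lin_on_tmap)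

lemma psi_n_tvec_assocL:
  assumes I: "finite I" and y: "y \<in> space I" and Z: "Z \<in> space (tidx IB IB)" and h: "h \<in> space IH"
  shows "Psi (tidx I IB) c (tvec (assocL (tvec y Z)) h)
      = assocL (assocL (tvec y (tmap IB (tidx IB IH) id phi_tw (assocR (tvec Z h)))))"
proof (rule lin_on_eq_on_tvec[OF finite_IB finite_IB _ _ _ Z])
  show "lin_on (tidx IB IB) (tidx (tidx (tidx I IB) IH) IB)
      (\<lambda>Z. Psi (tidx I IB) c (tvec (assocL (tvec y Z)) h))"
    by (intro lin_on_psi_n_comp lin_on_intros y h)
  show "lin_on (tidx IB IB) (tidx (tidx (tidx I IB) IH) IB)
      (\<lambda>Z. assocL (assocL (tvec y (tmap IB (tidx IB IH) id phi_tw (assocR (tvec Z h))))))"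
    by (intro lin_on_intros lin_on_locale_intros y h)
qed (use I y h in simp)

lemma tmap_psi_n_assocL_assocL:
  assumes I: "finite I" and y: "y \<in> space I" and W: "W \<in> space (tidx IB (tidx IH IB))"
  shows "tmap (tidx (tidx I IB) IH) IB (Psi I a) id (assocL (assocL (tvec y W)))
       = tvec_left_assoc I IH IB IB y (tmap (tidx IB IH) IB phi_tw id (assocL W))"
proof (rule lin_on_eq_on_tvec3_right[OF finite_IB finite_IH finite_IB _ _ _ W])
  show "lin_on (tidx IB (tidx IH IB)) (tidx (tidx (tidx I IH) IB) IB)
      (\<lambda>W. tmap (tidx (tidx I IB) IH) IB (Psi I a) id (assocL (assocL (tvec y W))))"
    by (intro lin_on_intros lin_on_psi_n y)
  show "lin_on (tidx IB (tidx IH IB)) (tidx (tidx (tidx I IH) IB) IB)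
      (\<lambda>W. tvec_left_assoc I IH IB IB y (tmap (tidx IB IH) IB phi_tw id (assocL W)))"
    by (intro lin_on_intros lin_on_locale_intros y)
qed (use I y in simp)

lemma ccomult_B_assocL_tvec:
  assumes I: "finite I" and a: "lin_on I I a" and y: "y \<in> space I" and P: "P \<in> space (tidx IH IB)"
  shows "ccomult IB aB DB (tidx I IH) (tmap I IH a aH) (assocL (tvec y P))
       = tvec_left_assoc I IH IB IB (a y) (assocL (tmap IH IB aH DBt P))"
proof (rule lin_on_eq_on_tvec[OF finite_IH finite_IB _ _ _ P])
  show "lin_on (tidx IH IB) (tidx (tidx (tidx I IH) IB) IB)
      (\<lambda>P. ccomult IB aB DB (tidx I IH) (tmap I IH a aH) (assocL (tvec y P)))"
    by (intro lin_on_comp[OF _ lin_on_ccomult[OF obj_B lin_on_DB lin_on_tmap[OF a]]] lin_on_intros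
        lin_on_maps y)
  show "lin_on (tidx IH IB) (tidx (tidx (tidx I IH) IB) IB)
      (\<lambda>P. tvec_left_assoc I IH IB IB (a y) (assocL (tmap IH IB aH DBt P)))"
    by (intro lin_on_intros lin_on_maps lin_onD[OF a y])
  fix i j assume ij: "i \<in> IH" "j \<in> IB"
  have "ccomult IB aB DB (tidx I IH) (tmap I IH a aH) (tvec (tvec y (bv i)) (bv j))
      = assocL (tvec (tvec (a y) (aH (bv i))) (DBt (bv j)))"
    using ccomult_tvec[OF _ finite_IB lin_on_DB lin_on_tmap[OF a is_obj_lin_on[OF obj_H]]] I ij y
    by (simp add: lin_on_linear_on[OF a] lin_onD[OF a])
  also have "\<dots> = tvec_left_assoc I IH IB IB (a y) (assocL (tvec (aH (bv i)) (DBt (bv j))))"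
    using tvec_left_assoc_assocL[of I IH IB IB "a y" "tvec (aH (bv i)) (DBt (bv j))"] I ij y lin_onD[OF a y]
    by simp
  finally show "ccomult IB aB DB (tidx I IH) (tmap I IH a aH) (assocL (tvec y (tvec (bv i) (bv j))))
      = tvec_left_assoc I IH IB IB (a y) (assocL (tmap IH IB aH DBt (tvec (bv i) (bv j))))"
    using ij y by simp
qed

lemma phi_tw_id_assocL_reparam:
  assumes p: "p \<in> space IB" and W: "W \<in> space (tidx IH IB)"
  shows "tmap (tidx IB IH) IB phi_tw id
           (assocL (tvec (zB (n + 1) p) (tmap IH IB id (zB n) (tmap IH IB gH gB W))))
       = iso_M1 (tmap (tidx IB IH) IB phi id (assocL (tvec p W)))"
proof (rule lin_on_eq_on_tvec[OF finite_IH finite_IB _ _ _ W])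
  show "lin_on (tidx IH IB) (tidx (tidx IH IB) IB)
      (\<lambda>W. tmap (tidx IB IH) IB phi_tw id
        (assocL (tvec (zB (n + 1) p) (tmap IH IB id (zB n) (tmap IH IB gH gB W)))))"
    by (intro lin_on_intros lin_on_locale_intros maps_in_space p)
  show "lin_on (tidx IH IB) (tidx (tidx IH IB) IB)
      (\<lambda>W. iso_M1 (tmap (tidx IB IH) IB phi id (assocL (tvec p W))))"
    by (intro lin_on_intros lin_on_locale_intros p)
qed (use p in \<open>simp add: id_def\<close>)

lemma comult_B_lhs_reparam:
  assumes h: "h \<in> space IH" and Z: "Z \<in> space (tidx IB IB)"
  shows "tmap (tidx IB IH) IB phi_tw id (assocL (tmap IB (tidx IB IH) id phi_tw
            (assocR (tvec (tmap IB IB (zB (n + 1)) (zB n) Z) h))))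
       = iso_M1 (tmap (tidx IB IH) IB phi id
           (assocL (tmap IB (tidx IB IH) id phi (assocR (tvec Z (aH (aH h)))))))"
proof (rule lin_on_eq_on_tvec[OF finite_IB finite_IB _ _ _ Z])
  show "lin_on (tidx IB IB) (tidx (tidx IH IB) IB)
      (\<lambda>Z. tmap (tidx IB IH) IB phi_tw id (assocL (tmap IB (tidx IB IH) id phi_tw
            (assocR (tvec (tmap IB IB (zB (n + 1)) (zB n) Z) h)))))"
    by (intro lin_on_intros lin_on_locale_intros h)
  show "lin_on (tidx IB IB) (tidx (tidx IH IB) IB)
      (\<lambda>Z. iso_M1 (tmap (tidx IB IH) IB phi id
        (assocL (tmap IB (tidx IB IH) id phi (assocR (tvec Z (aH (aH h))))))))"
    by (intro lin_on_intros lin_on_locale_intros maps_in_space h)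
  fix i j assume ij: "i \<in> IB" "j \<in> IB"
  let ?W = "phi (tvec (bv j) (aH (aH h)))"
  have "phi_tw (tvec (zB n (bv j)) h) = tmap IH IB id (zB n) (tmap IH IB gH gB ?W)"
    using ij h by (simp add: phi_gB_tvec)
  then show "tmap (tidx IB IH) IB phi_tw id (assocL (tmap IB (tidx IB IH) id phi_tw
            (assocR (tvec (tmap IB IB (zB (n + 1)) (zB n) (tvec (bv i) (bv j))) h))))
      = iso_M1 (tmap (tidx IB IH) IB phi id (assocL (tmap IB (tidx IB IH) id phi
            (assocR (tvec (tvec (bv i) (bv j)) (aH (aH h)))))))"
    using ij h phi_tw_id_assocL_reparam[of "bv i" ?W] by simp
qed

lemma comult_B_rhs_reparam:
  assumes W: "W \<in> space (tidx IH IB)"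
  shows "assocL (tmap IH IB aH DBt (tmap IH IB id (zB n) W)) = iso_M1 (assocL (tmap IH IB aH DB W))"
proof (rule lin_on_eq_on_tvec[OF finite_IH finite_IB _ _ _ W])
  show "lin_on (tidx IH IB) (tidx (tidx IH IB) IB)
      (\<lambda>W. assocL (tmap IH IB aH DBt (tmap IH IB id (zB n) W)))"
    by (intro lin_on_intros lin_on_maps)
  show "lin_on (tidx IH IB) (tidx (tidx IH IB) IB) (\<lambda>W. iso_M1 (assocL (tmap IH IB aH DB W)))"
    by (intro lin_on_intros lin_on_maps)
  fix i j assume ij: "i \<in> IH" "j \<in> IB"
  have "assocL (tvec (id (aH (bv i))) (tmap IB IB (zB n) (zB (n - 1)) (DB (bv j))))
     = iso_M1 (assocL (tvec (aH (bv i)) (DB (bv j))))"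
    by (rule assocL_tvec_tmap[where J'=IB and K'=IB and I'=IH]) (use ij in simp_all)
  then show "assocL (tmap IH IB aH DBt (tmap IH IB id (zB n) (tvec (bv i) (bv j))))
      = iso_M1 (assocL (tmap IH IB aH DB (tvec (bv i) (bv j))))"
    using ij by (simp add: DBt_zpow)
qed

context
  fixes I :: "ix set" and a :: "'k vec \<Rightarrow> 'k vec"
  assumes obj: "is_obj I a"
begin

declare is_obj_facts[OF obj, simp]

lemma comult_B_lhs:
  assumes x: "x \<in> space I" and c: "c \<in> space IB" and h: "h \<in> space IH"
  shows "tmap (tidx (tidx I IB) IH) IB (Psi I a) id (Psi (tidx I IB) (tmap I IB a aB)
            (tmap (tidx I IB) IH (ccomult IB aB DB I a) id (tvec (tvec x (zB (n + 1) c)) (gH h))))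
       = tvec_left_assoc I IH IB IB (a x) (iso_M1 (M1_lhs c h))"
proof -
  let ?Z = "DBt (zB (n + 1) c)"
  have "tmap (tidx I IB) IH (ccomult IB aB DB I a) id (tvec (tvec x (zB (n + 1) c)) (gH h))
      = tvec (assocL (tvec (a x) ?Z)) (gH h)"
    using x c h by (simp add: ccomult_tvec)
  moreover have "Psi (tidx I IB) (tmap I IB a aB) (tvec (assocL (tvec (a x) ?Z)) (gH h))
      = assocL (assocL (tvec (a x) (tmap IB (tidx IB IH) id phi_tw (assocR (tvec ?Z (gH h))))))"
    by (rule psi_n_tvec_assocL) (use x c h in simp_all)
  moreover have "tmap (tidx (tidx I IB) IH) IB (Psi I a) id
        (assocL (assocL (tvec (a x) (tmap IB (tidx IB IH) id phi_tw (assocR (tvec ?Z (gH h)))))))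
      = tvec_left_assoc I IH IB IB (a x)
          (tmap (tidx IB IH) IB phi_tw id (assocL (tmap IB (tidx IB IH) id phi_tw (assocR (tvec ?Z (gH h))))))"
    by (rule tmap_psi_n_assocL_assocL) (use x c h in simp_all)
  ultimately show ?thesis
    using comult_B_lhs_reparam[of "gH h" "DB c"] c h by (simp add: DBt_zpow)
qed

lemma comult_B_rhs:
  assumes x: "x \<in> space I" and c: "c \<in> space IB" and h: "h \<in> space IH"
  shows "ccomult IB aB DB (tidx I IH) (tmap I IH a aH) (Psi I a (tvec (tvec x (zB (n + 1) c)) (gH h)))
       = tvec_left_assoc I IH IB IB (a x) (iso_M1 (M1_rhs c h))"
  using ccomult_B_assocL_tvec[of I a x "phi_tw (tvec (zB (n + 1) c) (gH h))"]
    comult_B_rhs_reparam[of "phi (tvec c h)"] x c h by simp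

lemma comult_B_law_of_M1:
  assumes M1: "\<forall>b\<in>space IB. \<forall>h\<in>space IH. M1_lhs b h = M1_rhs b h"
    and w: "w \<in> space (tidx (tidx I IB) IH)"
  shows "tmap (tidx (tidx I IB) IH) IB (Psi I a) id
      (Psi (tidx I IB) (tmap I IB a aB) (tmap (tidx I IB) IH (ccomult IB aB DB I a) id w))
    = ccomult IB aB DB (tidx I IH) (tmap I IH a aH) (Psi I a w)"
proof (rule lin_on_eq_on_tvec3[OF is_obj_facts(1)[OF obj] finite_IB finite_IH _ _ _ w])
  show "lin_on (tidx (tidx I IB) IH) (tidx (tidx (tidx I IH) IB) IB)
      (\<lambda>w. tmap (tidx (tidx I IB) IH) IB (Psi I a) id
      (Psi (tidx I IB) (tmap I IB a aB) (tmap (tidx I IB) IH (ccomult IB aB DB I a) id w)))"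
    by (intro lin_on_intros lin_on_psi_n_comp lin_on_ccomult obj_B lin_on_DB is_obj_facts[OF obj] lin_on_psi_n)
  show "lin_on (tidx (tidx I IB) IH) (tidx (tidx (tidx I IH) IB) IB)
      (\<lambda>w. ccomult IB aB DB (tidx I IH) (tmap I IH a aH) (Psi I a w))"
    by (intro lin_on_comp[OF lin_on_psi_n] lin_on_ccomult obj_B lin_on_DB lin_on_tmap
        is_obj_facts[OF obj] lin_on_maps)
  fix i j k assume ijk: "i \<in> I" "j \<in> IB" "k \<in> IH"
  show "tmap (tidx (tidx I IB) IH) IB (Psi I a) id (Psi (tidx I IB) (tmap I IB a aB)
        (tmap (tidx I IB) IH (ccomult IB aB DB I a) id (tvec (tvec (bv i) (bv j)) (bv k))))
      = ccomult IB aB DB (tidx I IH) (tmap I IH a aH) (Psi I a (tvec (tvec (bv i) (bv j)) (bv k)))"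
    using comult_B_lhs[of "bv i" "zB (- n - 1) (bv j)" "aH (bv k)"]
      comult_B_rhs[of "bv i" "zB (- n - 1) (bv j)" "aH (bv k)"]
      M1[rule_format, of "zB (- n - 1) (bv j)" "aH (bv k)"] ijk
    by simp
qed

end

lemma comult_B_axiom_iff:
  "(\<forall>I a. is_obj I a \<longrightarrow> (\<forall>w\<in>space (tidx (tidx I IB) IH).
      tmap (tidx (tidx I IB) IH) IB (Psi I a) id
        (Psi (tidx I IB) (tmap I IB a aB) (tmap (tidx I IB) IH (ccomult IB aB DB I a) id w))
      = ccomult IB aB DB (tidx I IH) (tmap I IH a aH) (Psi I a w)))
   \<longleftrightarrow> (\<forall>b\<in>space IB. \<forall>h\<in>space IH. M1_lhs b h = M1_rhs b h)"
  (is "?axiom \<longleftrightarrow> ?M1")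
proof
  assume ax: ?axiom
  show ?M1
  proof (intro ballI)
    fix b h :: "'k vec" assume b: "b \<in> space IB" and h: "h \<in> space IH"
    let ?e = "bv (Ix 0) :: 'k vec"
    have "tvec_left_assoc {Ix 0} IH IB IB ?e (iso_M1 (M1_lhs b h))
        = tvec_left_assoc {Ix 0} IH IB IB ?e (iso_M1 (M1_rhs b h))"
      using ax[rule_format, OF is_obj_unit, of "tvec (tvec ?e (zB (n + 1) b)) (gH h)"]
        comult_B_lhs[OF is_obj_unit, of ?e b h] comult_B_rhs[OF is_obj_unit, of ?e b h] b h
      by simp
    then have "iso_M1 (M1_lhs b h) = iso_M1 (M1_rhs b h)"
      by (rule tvec_left_assoc_basis_inj[rotated -1]) (use b h in simp_all)
    then show "M1_lhs b h = M1_rhs b h"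
      by (rule iso_M1_inj[rotated -1]) (use b h in simp_all)
  qed
qed (simp add: comult_B_law_of_M1)

end

context twisting_map
begin

subsection \<open>Compatibility with the comultiplication of \<open>H\<close>\<close>

abbreviation "iso_M2 \<equiv> tmap (tidx IH IH) IB (tmap IH IH aH id) (zB n)"

lemma iso_M2_inj:
  assumes "V \<in> space (tidx (tidx IH IH) IB)" "V' \<in> space (tidx (tidx IH IH) IB)" "iso_M2 V = iso_M2 V'"
  shows "V = V'"
proof (rule tmap_inj[where f' = "tmap IH IH gH id" and g' = "zB (- n)", OF _ finite_IB _ _ _ _ _ _ assms])
  show "tmap IH IH gH id (tmap IH IH aH id v) = v" if "v \<in> space (tidx IH IH)" for v
    by (rule tmap_inverse[OF finite_IH finite_IH _ _ _ _ _ _ that]) simp_all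
qed (simp_all add: lin_on_tmap)

lemma psi_n_tvec_assocL_tvec:
  assumes I: "finite I" "finite J" and y: "y \<in> space I" and P: "P \<in> space (tidx J IB)" and h: "h \<in> space IH"
  shows "Psi (tidx I J) c (tvec (assocL (tvec y P)) h)
      = assocL (assocL (tvec y (tmap J (tidx IB IH) id phi_tw (assocR (tvec P h)))))"
proof (rule lin_on_eq_on_tvec[OF I(2) finite_IB _ _ _ P])
  show "lin_on (tidx J IB) (tidx (tidx (tidx I J) IH) IB)
      (\<lambda>P. Psi (tidx I J) c (tvec (assocL (tvec y P)) h))"
    by (intro lin_on_psi_n_comp lin_on_intros y h)
  show "lin_on (tidx J IB) (tidx (tidx (tidx I J) IH) IB)
      (\<lambda>P. assocL (assocL (tvec y (tmap J (tidx IB IH) id phi_tw (assocR (tvec P h))))))"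
    by (intro lin_on_intros lin_on_locale_intros y h)
qed (use I y h in simp)

lemma psi_n_tmap_psi_n_assocL:
  assumes I: "finite I" and x: "x \<in> space I" and b: "b \<in> space IB" and Z: "Z \<in> space (tidx IH IH)"
  shows "Psi (tidx I IH) c (tmap (tidx (tidx I IB) IH) IH (Psi I a) id (assocL (tvec (tvec x b) Z)))
       = tvec_left_assoc I IH IH IB x (assocL (tmap IH (tidx IB IH) id phi_tw
           (assocR (tmap (tidx IB IH) IH phi_tw id (assocL (tvec b Z))))))"
proof (rule lin_on_eq_on_tvec[OF finite_IH finite_IH _ _ _ Z])
  show "lin_on (tidx IH IH) (tidx (tidx (tidx I IH) IH) IB)
      (\<lambda>Z. Psi (tidx I IH) c (tmap (tidx (tidx I IB) IH) IH (Psi I a) id (assocL (tvec (tvec x b) Z))))"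
    by (intro lin_on_psi_n_comp lin_on_intros lin_on_psi_n x b tvec_in_space)
  show "lin_on (tidx IH IH) (tidx (tidx (tidx I IH) IH) IB) (\<lambda>Z. tvec_left_assoc I IH IH IB x
      (assocL (tmap IH (tidx IB IH) id phi_tw (assocR (tmap (tidx IB IH) IH phi_tw id (assocL (tvec b Z)))))))"
    by (intro lin_on_intros lin_on_locale_intros x b)
  fix i j assume ij: "i \<in> IH" "j \<in> IH"
  let ?P = "phi_tw (tvec b (bv i))"
  have "Psi (tidx I IH) c (tvec (assocL (tvec x ?P)) (bv j))
      = assocL (assocL (tvec x (tmap IH (tidx IB IH) id phi_tw (assocR (tvec ?P (bv j))))))"
    by (rule psi_n_tvec_assocL_tvec) (use I x b ij in simp_all)
  then show "Psi (tidx I IH) c (tmap (tidx (tidx I IB) IH) IH (Psi I a) id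
        (assocL (tvec (tvec x b) (tvec (bv i) (bv j)))))
      = tvec_left_assoc I IH IH IB x (assocL (tmap IH (tidx IB IH) id phi_tw
          (assocR (tmap (tidx IB IH) IH phi_tw id (assocL (tvec b (tvec (bv i) (bv j))))))))"
    using I x b ij
      tvec_left_assoc_assocL[of I IH IH IB x "tmap IH (tidx IB IH) id phi_tw (assocR (tvec ?P (bv j)))"]
    by simp
qed

lemma tmap_ccomult_H_assocL_tvec:
  assumes I: "finite I" and a: "lin_on I I a" and x: "x \<in> space I" and P: "P \<in> space (tidx IH IB)"
  shows "tmap (tidx I IH) IB (ccomult IH aH DH I a) id (assocL (tvec x P))
       = tvec_left_assoc I IH IH IB (a x) (tmap IH IB DHt id P)"
proof (rule lin_on_eq_on_tvec[OF finite_IH finite_IB _ _ _ P])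
  show "lin_on (tidx IH IB) (tidx (tidx (tidx I IH) IH) IB)
      (\<lambda>P. tmap (tidx I IH) IB (ccomult IH aH DH I a) id (assocL (tvec x P)))"
    by (intro lin_on_intros lin_on_ccomult obj_H lin_on_DH a x)
  show "lin_on (tidx IH IB) (tidx (tidx (tidx I IH) IH) IB)
      (\<lambda>P. tvec_left_assoc I IH IH IB (a x) (tmap IH IB DHt id P))"
    by (intro lin_on_intros lin_on_maps lin_onD[OF a x])
qed (use I a x in \<open>simp add: ccomult_tvec lin_onD[OF a] lin_on_linear_on[OF a]\<close>)

lemma id_phi_tw_assocR_reparam:
  assumes q: "q \<in> space IH" and W: "W \<in> space (tidx IH IB)"
  shows "assocL (tmap IH (tidx IB IH) id phi_tw (assocR (tvec (tmap IH IB aH (zB (n + 1)) W) (gH q))))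
       = iso_M2 (assocL (tmap IH (tidx IB IH) id phi (assocR (tvec W q))))"
proof (rule lin_on_eq_on_tvec[OF finite_IH finite_IB _ _ _ W])
  show "lin_on (tidx IH IB) (tidx (tidx IH IH) IB)
      (\<lambda>W. assocL (tmap IH (tidx IB IH) id phi_tw (assocR (tvec (tmap IH IB aH (zB (n + 1)) W) (gH q)))))"
    by (intro lin_on_intros lin_on_locale_intros maps_in_space q)
  show "lin_on (tidx IH IB) (tidx (tidx IH IH) IB)
      (\<lambda>W. iso_M2 (assocL (tmap IH (tidx IB IH) id phi (assocR (tvec W q)))))"
    by (intro lin_on_intros lin_on_locale_intros q)
  fix i j assume ij: "i \<in> IH" "j \<in> IB"
  have "assocL (tvec (aH (bv i)) (tmap IH IB id (zB n) (phi (tvec (bv j) q))))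
     = iso_M2 (assocL (tvec (bv i) (phi (tvec (bv j) q))))"
    by (rule assocL_tvec_tmap[where J'=IH and K'=IB and I'=IH]) (use ij q in simp_all)
  then show "assocL (tmap IH (tidx IB IH) id phi_tw
        (assocR (tvec (tmap IH IB aH (zB (n + 1)) (tvec (bv i) (bv j))) (gH q))))
      = iso_M2 (assocL (tmap IH (tidx IB IH) id phi (assocR (tvec (tvec (bv i) (bv j)) q))))"
    using ij q by simp
qed

lemma comult_H_lhs_reparam:
  assumes c: "c \<in> space IB" and Z: "Z \<in> space (tidx IH IH)"
  shows "assocL (tmap IH (tidx IB IH) id phi_tw (assocR (tmap (tidx IB IH) IH phi_tw id
            (assocL (tvec (zB (n + 2) c) (tmap IH IH id gH Z))))))
       = iso_M2 (assocL (tmap IH (tidx IB IH) id phi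
           (assocR (tmap (tidx IB IH) IH phi id (assocL (tvec c Z))))))"
proof (rule lin_on_eq_on_tvec[OF finite_IH finite_IH _ _ _ Z])
  show "lin_on (tidx IH IH) (tidx (tidx IH IH) IB) (\<lambda>Z. assocL (tmap IH (tidx IB IH) id phi_tw
      (assocR (tmap (tidx IB IH) IH phi_tw id (assocL (tvec (zB (n + 2) c) (tmap IH IH id gH Z)))))))"
    by (intro lin_on_intros lin_on_locale_intros maps_in_space c)
  show "lin_on (tidx IH IH) (tidx (tidx IH IH) IB) (\<lambda>Z. iso_M2 (assocL (tmap IH (tidx IB IH) id phi
      (assocR (tmap (tidx IB IH) IH phi id (assocL (tvec c Z)))))))"
    by (intro lin_on_intros lin_on_locale_intros c)
  fix i j assume ij: "i \<in> IH" "j \<in> IH"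
  let ?W = "phi (tvec c (bv i))"
  have "phi_tw (tvec (zB (n + 2) c) (bv i)) = tmap IH IB id (zB n) (phi (tvec (aB c) (aH (bv i))))"
    using ij c by simp
  also have "\<dots> = tmap IH IB aH (zB (n + 1)) ?W"
    using ij c by (simp add: phi_aB_tvec tmap_id_zpow_aB)
  finally show "assocL (tmap IH (tidx IB IH) id phi_tw (assocR (tmap (tidx IB IH) IH phi_tw id
            (assocL (tvec (zB (n + 2) c) (tmap IH IH id gH (tvec (bv i) (bv j))))))))
      = iso_M2 (assocL (tmap IH (tidx IB IH) id phi (assocR (tmap (tidx IB IH) IH phi id
            (assocL (tvec c (tvec (bv i) (bv j))))))))"
    using ij c id_phi_tw_assocR_reparam[of "bv j" ?W] by simp
qed

lemma comult_H_rhs_reparam: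
  assumes d: "d \<in> space IB" and h: "h \<in> space IH"
  shows "tmap IH IB DHt id (phi_tw (tvec (zB (n + 2) d) h)) = iso_M2 (M2_rhs d h)"
proof -
  let ?W = "phi (tvec d h)"
  have W: "?W \<in> space (tidx IH IB)" using d h by simp
  have "phi_tw (tvec (zB (n + 2) d) h) = tmap IH IB aH (zB (n + 1)) ?W"
    using d h by (simp add: phi_aB_tvec tmap_id_zpow_aB)
  moreover have "tmap IH IB DHt id (tmap IH IB aH (zB (n + 1)) ?W)
      = tmap IH IB (\<lambda>x. tmap IH IH aH id (DH x)) (\<lambda>y. zB n (aB y)) ?W"
    by (rule tmap_comp_cong[where I''="tidx IH IH" and J''=IB]) (simp_all add: W DHt_aH)
  moreover have "iso_M2 (M2_rhs d h) = tmap IH IB (\<lambda>x. tmap IH IH aH id (DH x)) (\<lambda>y. zB n (aB y)) ?W"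
    by (rule tmap_comp_cong[where I''="tidx IH IH" and J''=IB]) (simp_all add: W)
  ultimately show ?thesis by simp
qed

context
  fixes I :: "ix set" and a :: "'k vec \<Rightarrow> 'k vec"
  assumes obj: "is_obj I a"
begin

declare is_obj_facts[OF obj, simp]

lemma comult_H_lhs:
  assumes x: "x \<in> space I" and d: "d \<in> space IB" and h: "h \<in> space IH"
  shows "Psi (tidx I IH) (tmap I IH a aH) (tmap (tidx (tidx I IB) IH) IH (Psi I a) id
            (ccomult IH aH DH (tidx I IB) (tmap I IB a aB) (tvec (tvec x (zB (n + 2) d)) h)))
       = tvec_left_assoc I IH IH IB (a x) (iso_M2 (M2_lhs d h))"
proof -
  have "ccomult IH aH DH (tidx I IB) (tmap I IB a aB) (tvec (tvec x (zB (n + 2) d)) h)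
      = assocL (tvec (tvec (a x) (zB (n + 2) (aB d))) (DHt h))"
    using ccomult_tvec[OF _ finite_IH lin_on_DH lin_on_tmap[OF is_obj_facts(2)[OF obj] is_obj_lin_on[OF obj_B]]]
      x d h obj by (simp add: add.commute add.left_commute)
  then show ?thesis
    using psi_n_tmap_psi_n_assocL[of I "a x" "zB (n + 2) (aB d)" "DHt h"]
      comult_H_lhs_reparam[of "aB d" "DH h"] x d h obj
    by (simp add: twisted_comult_def)
qed

lemma comult_H_rhs:
  assumes x: "x \<in> space I" and d: "d \<in> space IB" and h: "h \<in> space IH"
  shows "tmap (tidx I IH) IB (ccomult IH aH DH I a) id (Psi I a (tvec (tvec x (zB (n + 2) d)) h))
       = tvec_left_assoc I IH IH IB (a x) (iso_M2 (M2_rhs d h))"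
  using tmap_ccomult_H_assocL_tvec[of I a x "phi_tw (tvec (zB (n + 2) d) h)"]
    comult_H_rhs_reparam[OF d h] x d h obj by simp

lemma comult_H_law_of_M2:
  assumes M2: "\<forall>b\<in>space IB. \<forall>h\<in>space IH. M2_lhs b h = M2_rhs b h"
    and w: "w \<in> space (tidx (tidx I IB) IH)"
  shows "Psi (tidx I IH) (tmap I IH a aH)
      (tmap (tidx (tidx I IB) IH) IH (Psi I a) id (ccomult IH aH DH (tidx I IB) (tmap I IB a aB) w))
    = tmap (tidx I IH) IB (ccomult IH aH DH I a) id (Psi I a w)"
proof (rule lin_on_eq_on_tvec3[OF is_obj_facts(1)[OF obj] finite_IB finite_IH _ _ _ w])
  show "lin_on (tidx (tidx I IB) IH) (tidx (tidx (tidx I IH) IH) IB)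
      (\<lambda>w. Psi (tidx I IH) (tmap I IH a aH)
      (tmap (tidx (tidx I IB) IH) IH (Psi I a) id (ccomult IH aH DH (tidx I IB) (tmap I IB a aB) w)))"
    by (intro lin_on_psi_n_comp lin_on_tmap_comp lin_on_ccomult obj_H lin_on_DH lin_on_tmap
        is_obj_facts[OF obj] lin_on_maps lin_on_psi_n lin_on_id)
  show "lin_on (tidx (tidx I IB) IH) (tidx (tidx (tidx I IH) IH) IB)
      (\<lambda>w. tmap (tidx I IH) IB (ccomult IH aH DH I a) id (Psi I a w))"
    by (intro lin_on_tmap_comp lin_on_psi_n lin_on_ccomult obj_H lin_on_DH is_obj_facts[OF obj] lin_on_id)
  fix i j k assume ijk: "i \<in> I" "j \<in> IB" "k \<in> IH"
  show "Psi (tidx I IH) (tmap I IH a aH) (tmap (tidx (tidx I IB) IH) IH (Psi I a) id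
        (ccomult IH aH DH (tidx I IB) (tmap I IB a aB) (tvec (tvec (bv i) (bv j)) (bv k))))
      = tmap (tidx I IH) IB (ccomult IH aH DH I a) id (Psi I a (tvec (tvec (bv i) (bv j)) (bv k)))"
    using comult_H_lhs[of "bv i" "zB (- n - 2) (bv j)" "bv k"]
      comult_H_rhs[of "bv i" "zB (- n - 2) (bv j)" "bv k"]
      M2[rule_format, of "zB (- n - 2) (bv j)" "bv k"] ijk
    by simp
qed

end

lemma comult_H_axiom_iff:
  "(\<forall>I a. is_obj I a \<longrightarrow> (\<forall>w\<in>space (tidx (tidx I IB) IH).
      Psi (tidx I IH) (tmap I IH a aH)
        (tmap (tidx (tidx I IB) IH) IH (Psi I a) id (ccomult IH aH DH (tidx I IB) (tmap I IB a aB) w))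
      = tmap (tidx I IH) IB (ccomult IH aH DH I a) id (Psi I a w)))
   \<longleftrightarrow> (\<forall>b\<in>space IB. \<forall>h\<in>space IH. M2_lhs b h = M2_rhs b h)"
  (is "?axiom \<longleftrightarrow> ?M2")
proof
  assume ax: ?axiom
  show ?M2
  proof (intro ballI)
    fix b h :: "'k vec" assume b: "b \<in> space IB" and h: "h \<in> space IH"
    let ?e = "bv (Ix 0) :: 'k vec"
    have "tvec_left_assoc {Ix 0} IH IH IB ?e (iso_M2 (M2_lhs b h))
        = tvec_left_assoc {Ix 0} IH IH IB ?e (iso_M2 (M2_rhs b h))"
      using ax[rule_format, OF is_obj_unit, of "tvec (tvec ?e (zB (n + 2) b)) h"]
        comult_H_lhs[OF is_obj_unit, of ?e b h] comult_H_rhs[OF is_obj_unit, of ?e b h] b h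
      by simp
    then have "iso_M2 (M2_lhs b h) = iso_M2 (M2_rhs b h)"
      by (rule tvec_left_assoc_basis_inj[rotated -1]) (use b h in simp_all)
    then show "M2_lhs b h = M2_rhs b h"
      by (rule iso_M2_inj[rotated -1]) (use b h in simp_all)
  qed
qed (simp add: comult_H_law_of_M2)

end

context twisting_map
begin

subsection \<open>Compatibility with the counits\<close>

abbreviation "epsH_id \<equiv> lin2 IH IB (\<lambda>y x. smul (eH y) x)"
abbreviation "id_epsB \<equiv> lin2 IH IB (\<lambda>y x. smul (eB x) y)"

lemma lin_on_epsH_id [simp]: "lin_on (tidx IH IB) IB epsH_id"
  and lin_on_id_epsB [simp]: "lin_on (tidx IH IB) IH id_epsB"
  by (simp_all add: lin_on_lin2)

lemma epsH_id_tvec [simp]: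
  "r \<in> space IH \<Longrightarrow> s \<in> space IB \<Longrightarrow> epsH_id (tvec r s) = smul (eH r) s"
  and id_epsB_tvec [simp]: "r \<in> space IH \<Longrightarrow> s \<in> space IB
   \<Longrightarrow> id_epsB (tvec r s) = smul (eB s) r"
  by (rule lin2_tvec; use lin_functional_eH lin_functional_eB in
      \<open>simp add: linear_on_def lin_functional_def smul_add smul_mult smul_vadd smul_commute\<close>)+

lemma epsH_id_zpow:
  assumes W: "W \<in> space (tidx IH IB)"
  shows "epsH_id (tmap IH IB id (zB m) W) = zB m (epsH_id W)"
proof (rule lin_on_eq_on_tvec[OF finite_IH finite_IB _ _ _ W])
  show "lin_on (tidx IH IB) IB (\<lambda>W. epsH_id (tmap IH IB id (zB m) W))"
    by (intro lin_on_comp[OF _ lin_on_epsH_id] lin_on_intros lin_on_maps)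
  show "lin_on (tidx IH IB) IB (\<lambda>W. zB m (epsH_id W))"
    by (rule lin_on_comp[OF lin_on_epsH_id lin_on_zpow[OF obj_B]])
qed simp

lemma id_epsB_zpow:
  assumes W: "W \<in> space (tidx IH IB)"
  shows "id_epsB (tmap IH IB id (zB m) W) = id_epsB W"
proof (rule lin_on_eq_on_tvec[OF finite_IH finite_IB _ _ _ W])
  show "lin_on (tidx IH IB) IH (\<lambda>W. id_epsB (tmap IH IB id (zB m) W))"
    by (intro lin_on_comp[OF _ lin_on_id_epsB] lin_on_intros lin_on_maps)
qed (rule lin_on_id_epsB, simp)

context
  fixes I :: "ix set" and a :: "'k vec \<Rightarrow> 'k vec"
  assumes obj: "is_obj I a"
begin

declare is_obj_facts[OF obj, simp]

abbreviation "gX \<equiv> inv_into (space I) a"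

lemma gX_facts [simp]: "lin_on I I gX" "linear_on I gX" "v \<in> space I \<Longrightarrow> gX v \<in> space I"
  "v \<in> space I \<Longrightarrow> gX (smul c v) = smul c (gX v)"
  using lin_on_obj_inv[OF obj] by (simp_all add: lin_on_linear_on lin_onD lin_on_smul)

lemma tmap_ccounit_H_assocL_tvec:
  assumes x: "x \<in> space I" and P: "P \<in> space (tidx IH IB)"
  shows "tmap (tidx I IH) IB (ccounit IH eH I a) id (assocL (tvec x P)) = tvec (gX x) (epsH_id P)"
proof (rule lin_on_eq_on_tvec[OF finite_IH finite_IB _ _ _ P])
  show "lin_on (tidx IH IB) (tidx I IB)
      (\<lambda>P. tmap (tidx I IH) IB (ccounit IH eH I a) id (assocL (tvec x P)))"
    by (intro lin_on_intros lin_on_ccounit[OF obj] x)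
  show "lin_on (tidx IH IB) (tidx I IB) (\<lambda>P. tvec (gX x) (epsH_id P))"
    by (intro lin_on_intros lin_on_comp[OF _ lin_on_epsH_id] gX_facts x)
qed (use x obj in \<open>simp add: ccounit_tvec lin_functional_eH tvec_linear\<close>)

lemma ccounit_B_assocL_tvec:
  assumes x: "x \<in> space I" and P: "P \<in> space (tidx IH IB)"
  shows "ccounit IB eB (tidx I IH) (tmap I IH a aH) (assocL (tvec x P)) = tvec (gX x) (gH (id_epsB P))"
proof (rule lin_on_eq_on_tvec[OF finite_IH finite_IB _ _ _ P])
  have obj_XH: "is_obj (tidx I IH) (tmap I IH a aH)" by (rule is_obj_tmap(1)[OF obj obj_H])
  show "lin_on (tidx IH IB) (tidx I IH)
      (\<lambda>P. ccounit IB eB (tidx I IH) (tmap I IH a aH) (assocL (tvec x P)))"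
    by (intro lin_on_comp[OF _ lin_on_ccounit[OF obj_XH]] lin_on_intros x)
  show "lin_on (tidx IH IB) (tidx I IH) (\<lambda>P. tvec (gX x) (gH (id_epsB P)))"
    by (intro lin_on_intros lin_on_locale_intros lin_on_comp[OF _ lin_on_id_epsB] gX_facts x)
  fix i j assume ij: "i \<in> IH" "j \<in> IB"
  have "ccounit IB eB (tidx I IH) (tmap I IH a aH) (tvec (tvec x (bv i)) (bv j))
      = smul (eB (bv j)) (inv_into (space (tidx I IH)) (tmap I IH a aH) (tvec x (bv i)))"
    by (rule ccounit_tvec[OF _ finite_IB lin_functional_eB obj_XH]) (use ij x obj in simp_all)
  also have "\<dots> = smul (eB (bv j)) (tmap I IH gX gH (tvec x (bv i)))"
    using is_obj_tmap(2)[OF obj obj_H, of "tvec x (bv i)"] ij x by simp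
  finally show "ccounit IB eB (tidx I IH) (tmap I IH a aH) (assocL (tvec x (tvec (bv i) (bv j))))
      = tvec (gX x) (gH (id_epsB (tvec (bv i) (bv j))))"
    using ij x obj by (simp add: tvec_linear)
qed

lemma counit_H_lhs:
  assumes x: "x \<in> space I" and c: "c \<in> space IB" and h: "h \<in> space IH"
  shows "tmap (tidx I IH) IB (ccounit IH eH I a) id (Psi I a (tvec (tvec x (zB (n + 1) c)) (gH h)))
       = tvec (gX x) (zB n (M3_lhs c h))"
  using tmap_ccounit_H_assocL_tvec[OF x, of "phi_tw (tvec (zB (n + 1) c) (gH h))"] x c h obj
  by (simp add: epsH_id_zpow)

lemma counit_H_rhs:
  assumes x: "x \<in> space I" and c: "c \<in> space IB" and h: "h \<in> space IH"
  shows "ccounit IH eH (tidx I IB) (tmap I IB a aB) (tvec (tvec x (zB (n + 1) c)) (gH h))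
       = tvec (gX x) (zB n (M3_rhs c h))"
proof -
  have "ccounit IH eH (tidx I IB) (tmap I IB a aB) (tvec (tvec x (zB (n + 1) c)) (gH h))
      = smul (eH h) (inv_into (space (tidx I IB)) (tmap I IB a aB) (tvec x (zB (n + 1) c)))"
    using ccounit_tvec[OF _ finite_IH lin_functional_eH is_obj_tmap(1)[OF obj obj_B]] x c h obj by simp
  also have "\<dots> = smul (eH h) (tmap I IB gX gB (tvec x (zB (n + 1) c)))"
    using is_obj_tmap(2)[OF obj obj_B, of "tvec x (zB (n + 1) c)"] x c by simp
  finally show ?thesis using x c obj by (simp add: tvec_linear)
qed

lemma counit_B_lhs:
  assumes x: "x \<in> space I" and c: "c \<in> space IB" and h: "h \<in> space IH"
  shows "ccounit IB eB (tidx I IH) (tmap I IH a aH) (Psi I a (tvec (tvec x (zB (n + 1) c)) (gH h)))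
       = tvec (gX x) (gH (M4_lhs c h))"
  using ccounit_B_assocL_tvec[OF x, of "phi_tw (tvec (zB (n + 1) c) (gH h))"] x c h obj
  by (simp add: id_epsB_zpow)

lemma counit_B_rhs:
  assumes x: "x \<in> space I" and c: "c \<in> space IB" and h: "h \<in> space IH"
  shows "tmap (tidx I IB) IH (ccounit IB eB I a) id (tvec (tvec x (zB (n + 1) c)) (gH h))
       = tvec (gX x) (gH (M4_rhs c h))"
  using x c h obj by (simp add: ccounit_tvec lin_functional_eB tvec_linear)

lemma counit_H_law_of_M3:
  assumes M3: "\<forall>b\<in>space IB. \<forall>h\<in>space IH. M3_lhs b h = M3_rhs b h"
    and w: "w \<in> space (tidx (tidx I IB) IH)"
  shows "tmap (tidx I IH) IB (ccounit IH eH I a) id (Psi I a w)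
      = ccounit IH eH (tidx I IB) (tmap I IB a aB) w"
proof (rule lin_on_eq_on_tvec3[OF is_obj_facts(1)[OF obj] finite_IB finite_IH _ _ _ w])
  show "lin_on (tidx (tidx I IB) IH) (tidx I IB)
      (\<lambda>w. tmap (tidx I IH) IB (ccounit IH eH I a) id (Psi I a w))"
    by (intro lin_on_tmap_comp lin_on_psi_n lin_on_ccounit[OF obj] lin_on_id)
  show "lin_on (tidx (tidx I IB) IH) (tidx I IB) (ccounit IH eH (tidx I IB) (tmap I IB a aB))"
    by (rule lin_on_ccounit[OF is_obj_tmap(1)[OF obj obj_B]])
  fix i j k assume ijk: "i \<in> I" "j \<in> IB" "k \<in> IH"
  show "tmap (tidx I IH) IB (ccounit IH eH I a) id (Psi I a (tvec (tvec (bv i) (bv j)) (bv k)))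
      = ccounit IH eH (tidx I IB) (tmap I IB a aB) (tvec (tvec (bv i) (bv j)) (bv k))"
    using counit_H_lhs[of "bv i" "zB (- n - 1) (bv j)" "aH (bv k)"]
      counit_H_rhs[of "bv i" "zB (- n - 1) (bv j)" "aH (bv k)"]
      M3[rule_format, of "zB (- n - 1) (bv j)" "aH (bv k)"] ijk
    by simp
qed

lemma counit_B_law_of_M4:
  assumes M4: "\<forall>b\<in>space IB. \<forall>h\<in>space IH. M4_lhs b h = M4_rhs b h"
    and w: "w \<in> space (tidx (tidx I IB) IH)"
  shows "ccounit IB eB (tidx I IH) (tmap I IH a aH) (Psi I a w)
      = tmap (tidx I IB) IH (ccounit IB eB I a) id w"
proof (rule lin_on_eq_on_tvec3[OF is_obj_facts(1)[OF obj] finite_IB finite_IH _ _ _ w])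
  show "lin_on (tidx (tidx I IB) IH) (tidx I IH)
      (\<lambda>w. ccounit IB eB (tidx I IH) (tmap I IH a aH) (Psi I a w))"
    by (rule lin_on_comp[OF lin_on_psi_n lin_on_ccounit[OF is_obj_tmap(1)[OF obj obj_H]]])
  show "lin_on (tidx (tidx I IB) IH) (tidx I IH) (tmap (tidx I IB) IH (ccounit IB eB I a) id)"
    by (rule lin_on_tmap[OF lin_on_ccounit[OF obj] lin_on_id])
  fix i j k assume ijk: "i \<in> I" "j \<in> IB" "k \<in> IH"
  show "ccounit IB eB (tidx I IH) (tmap I IH a aH) (Psi I a (tvec (tvec (bv i) (bv j)) (bv k)))
      = tmap (tidx I IB) IH (ccounit IB eB I a) id (tvec (tvec (bv i) (bv j)) (bv k))"
    using counit_B_lhs[of "bv i" "zB (- n - 1) (bv j)" "aH (bv k)"]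
      counit_B_rhs[of "bv i" "zB (- n - 1) (bv j)" "aH (bv k)"]
      M4[rule_format, of "zB (- n - 1) (bv j)" "aH (bv k)"] ijk
    by simp
qed

end

lemma counit_H_axiom_iff:
  "(\<forall>I a. is_obj I a \<longrightarrow> (\<forall>w\<in>space (tidx (tidx I IB) IH).
      tmap (tidx I IH) IB (ccounit IH eH I a) id (Psi I a w) = ccounit IH eH (tidx I IB) (tmap I IB a aB) w))
   \<longleftrightarrow> (\<forall>b\<in>space IB. \<forall>h\<in>space IH. M3_lhs b h = M3_rhs b h)"
  (is "?axiom \<longleftrightarrow> ?M3")
proof
  assume ax: ?axiom
  show ?M3
  proof (intro ballI)
    fix b h :: "'k vec" assume b: "b \<in> space IB" and h: "h \<in> space IH"
    let ?e = "bv (Ix 0) :: 'k vec"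
    have "tvec ?e (zB n (M3_lhs b h)) = tvec ?e (zB n (M3_rhs b h))"
      using ax[rule_format, OF is_obj_unit, of "tvec (tvec ?e (zB (n + 1) b)) (gH h)"]
        counit_H_lhs[OF is_obj_unit, of ?e b h] counit_H_rhs[OF is_obj_unit, of ?e b h] b h
      by (simp add: unit_inv_basis)
    then have "zB (- n) (zB n (M3_lhs b h)) = zB (- n) (zB n (M3_rhs b h))"
      by (metis tvec_basis_left_inj)
    then show "M3_lhs b h = M3_rhs b h" using b h by (simp add: lin2_in_space)
  qed
qed (simp add: counit_H_law_of_M3)

lemma counit_B_axiom_iff:
  "(\<forall>I a. is_obj I a \<longrightarrow> (\<forall>w\<in>space (tidx (tidx I IB) IH).
      ccounit IB eB (tidx I IH) (tmap I IH a aH) (Psi I a w) = tmap (tidx I IB) IH (ccounit IB eB I a) id w))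
   \<longleftrightarrow> (\<forall>b\<in>space IB. \<forall>h\<in>space IH. M4_lhs b h = M4_rhs b h)"
  (is "?axiom \<longleftrightarrow> ?M4")
proof
  assume ax: ?axiom
  show ?M4
  proof (intro ballI)
    fix b h :: "'k vec" assume b: "b \<in> space IB" and h: "h \<in> space IH"
    let ?e = "bv (Ix 0) :: 'k vec"
    have "tvec ?e (gH (M4_lhs b h)) = tvec ?e (gH (M4_rhs b h))"
      using ax[rule_format, OF is_obj_unit, of "tvec (tvec ?e (zB (n + 1) b)) (gH h)"]
        counit_B_lhs[OF is_obj_unit, of ?e b h] counit_B_rhs[OF is_obj_unit, of ?e b h] b h
      by (simp add: unit_inv_basis)
    then have "aH (gH (M4_lhs b h)) = aH (gH (M4_rhs b h))"
      by (metis tvec_basis_left_inj)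
    then show "M4_lhs b h = M4_rhs b h" using b h by (simp add: lin2_in_space)
  qed
qed (simp add: counit_B_law_of_M4)

end

theorem proposition4p4:
  fixes IB IH :: "ix set"
    and aB DB aH DH :: "('k::field_char_0) vec \<Rightarrow> 'k vec"
    and eB eH :: "'k vec \<Rightarrow> 'k"
    and phi :: "'k vec \<Rightarrow> 'k vec"
    and n :: int
  assumes "hom_coalgebra IB aB DB eB"
    and "hom_coalgebra IH aH DH eH"
    and "lin_on (tidx IB IH) (tidx IH IB) phi"
    and "\<forall>w\<in>space (tidx IB IH). phi (tmap IB IH aB aH w) = tmap IH IB aH aB (phi w)"
  shows "distr_law IH aH DH eH IB aB DB eB (psi_n IB aB IH aH phi n) \<longleftrightarrow>
     (\<forall>b\<in>space IB. \<forall>h\<in>space IH.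
        tmap (tidx IB IH) IB phi id
           (assocL (tmap IB (tidx IB IH) id phi (assocR (tvec (DB b) (aH h)))))
          = assocL (tmap IH IB aH DB (phi (tvec b h)))
      \<and> assocL (tmap IH (tidx IB IH) id phi
           (assocR (tmap (tidx IB IH) IH phi id (assocL (tvec (aB b) (DH h))))))
          = tmap IH IB DH aB (phi (tvec b h))
      \<and> lin2 IH IB (\<lambda>y x. smul (eH y) x) (phi (tvec b h)) = smul (eH h) b
      \<and> lin2 IH IB (\<lambda>y x. smul (eB x) y) (phi (tvec b h)) = smul (eB b) h)"
proof -
  interpret twisting_map IB IH aB DB aH DH eB eH phi n
    using assms by unfold_locales
  show ?thesis
    unfolding distr_law_def Let_def ball_conj_distrib imp_conjR all_conj_distrib
      comult_B_axiom_iff comult_H_axiom_iff counit_H_axiom_iff counit_B_axiom_iff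
    using psi_n_is_hom psi_n_natural by blast
qed

end
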